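(* Let $d\ge2$ and let $\Delta\subseteq\mathbb{Q}^d$ be a $d$-dimensional IP simplex of Gorenstein index $g$. Then $$\mathrm{Vol}(\Delta)\,\mathrm{Vol}(\Delta^* )\le \frac{t_{g,d+1}^2}{g^{d+2}}.$$ Equality holds if and only if there is $H\in\mathrm{GL}(d,\mathbb{Q})$ such that $\Delta\cong H\cdot\Delta(P)$, where $P$ is the $d\times(d+1)$ matrix whose first $d$ columns are the standard basis vectors $e_1,\dots,e_d$ and whose last column is $\big(-\tfrac{t_{g,d+1}}{s_{g,1}},\dots,-\tfrac{t_{g,d+1}}{s_{g,d}}\big)^T$.
   Context: An IP simplex is a full-dimensional simplex in $\mathbb{Q}^d$ with rational vertices containing the origin in its interior. Its dual is $\Delta^*=\{u\in\mathbb{Q}^d:\langle u,v\rangle\ge-1\ \forall v\in\Delta\}$. $g_{\mathbb{Q}}(\Delta)$ is the least positive integer $k$ with $k\Delta$ having vertices in $\mathbb{Z}^d$, and the Gorenstein index is $g(\Delta)=g_{\mathbb{Q}}(\Delta)g_{\mathbb{Q}}(\Delta^* )$. $\mathrm{Vol}$ is $d!$ times Euclidean volume. $\cong$ means equality up to $\mathrm{GL}(d,\mathbb{Z})$; $\Delta(P)$ is the convex hull of the columns of $P$. Sylvester sequences: $s_{g,1}=g+1$, $s_{g,k+1}=s_{g,k}(s_{g,k}-1)+1$, $t_{g,k}=s_{g,k}-1$. *)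

theory Defs
  imports "HOL-Analysis.Analysis"
begin

text \<open>Sylvester sequences, indexed from 1: s g 1 = g+1, s g (k+1) = s g k * (s g k - 1) + 1.
  The value at index 0 is an unused dummy.\<close>
fun sylv_s :: "nat \<Rightarrow> nat \<Rightarrow> nat" where
  "sylv_s g 0 = 0"
| "sylv_s g (Suc 0) = g + 1"
| "sylv_s g (Suc (Suc k)) = sylv_s g (Suc k) * (sylv_s g (Suc k) - 1) + 1"

definition sylv_t :: "nat \<Rightarrow> nat \<Rightarrow> nat" where
  "sylv_t g k = sylv_s g k - 1"

definition rat_vec :: "real^'n \<Rightarrow> bool" where
  "rat_vec x \<longleftrightarrow> (\<forall>i. x $ i \<in> \<rat>)"

definition int_vec :: "real^'n \<Rightarrow> bool" where
  "int_vec x \<longleftrightarrow> (\<forall>i. x $ i \<in> \<int>)"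

definition IP_simplex :: "(real^'n) set \<Rightarrow> bool" where
  "IP_simplex S \<longleftrightarrow> (\<exists>V. finite V \<and> card V = CARD('n) + 1 \<and> \<not> affine_dependent V
      \<and> (\<forall>v\<in>V. rat_vec v) \<and> S = convex hull V \<and> 0 \<in> interior S)"

definition polar_dual :: "(real^'n) set \<Rightarrow> (real^'n) set" where
  "polar_dual S = {u. \<forall>v\<in>S. inner u v \<ge> -1}"

definition vertices :: "(real^'n) set \<Rightarrow> (real^'n) set" where
  "vertices S = {v. v extreme_point_of S}"

definition gQ :: "(real^'n) set \<Rightarrow> nat" where
  "gQ S = (LEAST k::nat. k > 0 \<and> (\<forall>v\<in>vertices S. int_vec (real k *\<^sub>R v)))"

definition gorenstein_index :: "(real^'n) set \<Rightarrow> nat" where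
  "gorenstein_index S = gQ S * gQ (polar_dual S)"

definition Vol :: "(real^'n) set \<Rightarrow> real" where
  "Vol S = fact CARD('n) * measure lebesgue S"

definition GLZ_equiv :: "(real^'n) set \<Rightarrow> (real^'n) set \<Rightarrow> bool" where
  "GLZ_equiv A B \<longleftrightarrow> (\<exists>U::real^'n^'n. (\<forall>i j. U $ i $ j \<in> \<int>) \<and> \<bar>det U\<bar> = 1
      \<and> A = (\<lambda>x. U *v x) ` B)"

definition GLQ :: "real^'n^'n \<Rightarrow> bool" where
  "GLQ H \<longleftrightarrow> (\<forall>i j. H $ i $ j \<in> \<rat>) \<and> det H \<noteq> 0"

definition coord_idx :: "'n::finite \<Rightarrow> nat" where
  "coord_idx = (SOME f. bij_betw f (UNIV::'n set) {1..CARD('n)})"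

text \<open>Delta(P) for the extremal matrix P: columns e_1..e_d and
  (-t_{g,d+1}/s_{g,1}, ..., -t_{g,d+1}/s_{g,d}).\<close>
definition extremal_simplex :: "nat \<Rightarrow> (real^'n) set" where
  "extremal_simplex g = convex hull
     (range (\<lambda>i::'n. axis i (1::real)) \<union>
      {\<chi> i. - real (sylv_t g (CARD('n) + 1)) / real (sylv_s g (coord_idx i))})"

end

(*
  Write an IP simplex Delta, with dual Delta', as M (conv (e_1, ..., e_d, -q)) where M is rational
  and invertible and q > 0. Then Vol Delta * Vol Delta' = (1 + sum q)^(d+1) / prod q, independently
  of M. Pairing the vertices of g_Q(Delta) Delta with those of g_Q(Delta') Delta' shows that, for the
  Gorenstein index g, the numbers a_0 = g (1 + sum q) and a_i = g (1 + sum q) / q_i are positive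
  integers. Their reciprocals are the barycentric coordinates of the origin divided by g, so
  sum 1/a_j = 1/g, and Vol Delta * Vol Delta' = prod a_j / g^(d+1).

  Among positive integers with sum 1/a_j = 1/g the product is largest, namely t_{g,d+1}^2 / g,
  exactly for the Sylvester denominators s_{g,1}, ..., s_{g,d}, t_{g,d+1}: by Curtiss' bound the
  reciprocals of the sorted a_j are majorized by those of the Sylvester denominators, and a
  multiplicative Karamata inequality compares the products. In the equality case the barycentric
  coordinates of the origin are those of the extremal simplex, which determines Delta up to a
  rational linear map.
*)

theory Submission
  imports Defs
begin

section \<open>Sylvester sequences\<close>

lemma sylv_s_ge_2:
  assumes "g \<ge> 1" "k \<ge> 1"
  shows "sylv_s g k \<ge> 2"
proof -
  have "sylv_s g (Suc j) \<ge> 2" for j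
  proof (induction j)
    case (Suc j)
    have "sylv_s g (Suc j) * (sylv_s g (Suc j) - 1) \<ge> 2 * 1"
      using Suc.IH by (intro mult_le_mono) auto
    moreover have "sylv_s g (Suc (Suc j)) = sylv_s g (Suc j) * (sylv_s g (Suc j) - 1) + 1"
      by (rule sylv_s.simps(3))
    ultimately show ?case by linarith
  qed (use assms(1) in simp)
  moreover obtain j where "k = Suc j" using assms(2) by (cases k) auto
  ultimately show ?thesis by blast
qed

lemma sylv_t_Suc: "k \<ge> 1 \<Longrightarrow> sylv_t g (Suc k) = sylv_s g k * sylv_t g k"
  by (cases k) (auto simp: sylv_t_def)

lemma sylv_t_ge_1: "g \<ge> 1 \<Longrightarrow> k \<ge> 1 \<Longrightarrow> sylv_t g k \<ge> 1"
  using sylv_s_ge_2[of g k] by (simp add: sylv_t_def)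

lemma mult_prod_sylv_s: "g * (\<Prod>i<k. sylv_s g (Suc i)) = sylv_t g (Suc k)"
proof (induction k)
  case (Suc k)
  then show ?case using sylv_t_Suc[of "Suc k" g] by (simp add: algebra_simps)
qed (simp add: sylv_t_def)

lemma sum_inverse_sylv_s:
  assumes "g \<ge> 1"
  shows "(\<Sum>i<k. 1 / real (sylv_s g (Suc i))) = 1 / real g - 1 / real (sylv_t g (Suc k))"
proof (induction k)
  case 0 then show ?case by (simp add: sylv_t_def)
next
  case (Suc k)
  have "real (sylv_t g (Suc k)) \<ge> 1" using sylv_t_ge_1[OF assms, of "Suc k"] by simp
  moreover have "real (sylv_s g (Suc k)) = real (sylv_t g (Suc k)) + 1"
    using sylv_s_ge_2[OF assms, of "Suc k"] by (simp add: sylv_t_def)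
  moreover have "real (sylv_t g (Suc (Suc k))) = real (sylv_s g (Suc k)) * real (sylv_t g (Suc k))"
    using sylv_t_Suc[of "Suc k" g] by simp
  ultimately have "1 / real (sylv_t g (Suc k)) - 1 / real (sylv_s g (Suc k))
      = 1 / real (sylv_t g (Suc (Suc k)))"
    by (simp add: field_simps)
  then show ?case using Suc by simp
qed

lemma sylv_s_strict_mono:
  assumes "g \<ge> 1" "1 \<le> i" "i < j"
  shows "sylv_s g i < sylv_s g j"
  using assms(3)
proof (induction j)
  case (Suc j)
  have "sylv_s g j < sylv_s g (Suc j)"
  proof -
    have "1 \<le> j" using Suc.prems assms(2) by simp
    then have "sylv_s g j \<le> sylv_t g (Suc j)"
      using sylv_t_Suc[of j g] sylv_t_ge_1[OF assms(1), of j] by simp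
    then show ?thesis using sylv_s_ge_2[OF assms(1), of "Suc j"] by (simp add: sylv_t_def)
  qed
  then show ?case using Suc by (cases "i = j") auto
qed simp

lemma sylv_s_less_sylv_t:
  assumes "g \<ge> 1" "2 \<le> d" "1 \<le> k" "k \<le> d"
  shows "sylv_s g k < sylv_t g (d + 1)"
proof -
  have "sylv_s g k \<le> sylv_s g d"
    using sylv_s_strict_mono[OF assms(1,3), of d] assms(4) by (cases "k = d") auto
  moreover have "sylv_s g d \<ge> 3"
    using sylv_s_strict_mono[OF assms(1), of 1 d] sylv_s_ge_2[OF assms(1), of 1] assms(2) by simp
  moreover have "sylv_t g (d + 1) = sylv_s g d * (sylv_s g d - 1)"
    using assms(2) by (cases d) (auto simp: sylv_t_def)
  moreover have "sylv_s g d * 2 \<le> sylv_s g d * (sylv_s g d - 1)"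
    using \<open>sylv_s g d \<ge> 3\<close> by (intro mult_le_mono2) simp
  ultimately show ?thesis by linarith
qed

lemma card_sylvester_values:
  assumes "g \<ge> 1" "d \<ge> 2"
  shows "card (sylv_s g ` {1..<d + 1} \<union> {sylv_t g (d + 1)}) = d + 1"
proof -
  have "inj_on (sylv_s g) {1..<d + 1}"
    using sylv_s_strict_mono[OF assms(1)] by (intro inj_onI) (metis atLeastLessThan_iff linorder_neqE_nat less_irrefl)
  moreover have "sylv_t g (d + 1) \<notin> sylv_s g ` {1..<d + 1}"
    using sylv_s_less_sylv_t[OF assms] by fastforce
  ultimately show ?thesis by (simp add: card_image)
qed

section \<open>A multiplicative Karamata inequality\<close>

lemma abel_sum_mult_ge:
  fixes u w :: "nat \<Rightarrow> real"
  assumes "\<And>i. i < n \<Longrightarrow> w (Suc i) \<le> w i" and "\<And>l. l \<le> n \<Longrightarrow> 0 \<le> (\<Sum>i<l. u i)"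
  shows "(\<Sum>i<n. u i) * w n \<le> (\<Sum>i<n. u i * w i)"
  using assms
proof (induction n)
  case (Suc n)
  have "(\<Sum>i<Suc n. u i) * w (Suc n) \<le> (\<Sum>i<Suc n. u i) * w n"
    using Suc.prems(1)[of n] Suc.prems(2)[of "Suc n"] by (intro mult_left_mono) auto
  also have "\<dots> = (\<Sum>i<n. u i) * w n + u n * w n" by (simp add: algebra_simps)
  also have "\<dots> \<le> (\<Sum>i<Suc n. u i * w i)" using Suc by simp
  finally show ?case .
qed simp

lemma sum_le_sum_if_prefix_prod_le:
  fixes y z :: "nat \<Rightarrow> real"
  assumes ypos: "\<And>i. i < m \<Longrightarrow> 0 < y i" and zpos: "\<And>i. i < m \<Longrightarrow> 0 < z i"
    and ymono: "\<And>i. Suc i < m \<Longrightarrow> y (Suc i) \<le> y i"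
    and prod_le: "\<And>l. l \<le> m \<Longrightarrow> (\<Prod>i<l. y i) \<le> (\<Prod>i<l. z i)"
  shows "(\<Sum>i<m. y i) \<le> (\<Sum>i<m. z i)"
proof -
  define L where "L i = ln (z i) - ln (y i)" for i
  define w where "w i = (if i < m then y i else 0)" for i
  \<comment> \<open>\<open>y (z/y - 1) \<ge> y ln (z/y)\<close> termwise, and the partial sums of \<open>L\<close> are nonnegative\<close>
  have "(\<Sum>i<m. L i) * w m \<le> (\<Sum>i<m. L i * w i)"
  proof (rule abel_sum_mult_ge)
    show "w (Suc i) \<le> w i" if "i < m" for i using ymono[of i] ypos[OF that] by (auto simp: w_def)
    show "0 \<le> (\<Sum>i<l. L i)" if "l \<le> m" for l
    proof -
      have "ln (\<Prod>i<l. y i) \<le> ln (\<Prod>i<l. z i)"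
        using prod_le[OF that] that ypos zpos by (subst ln_le_cancel_iff) (auto intro!: prod_pos)
      moreover have "ln (\<Prod>i<l. y i) = (\<Sum>i<l. ln (y i))" "ln (\<Prod>i<l. z i) = (\<Sum>i<l. ln (z i))"
        using that ypos zpos by (auto intro!: ln_prod simp: less_imp_neq[symmetric])
      ultimately show ?thesis by (simp add: L_def sum_subtractf)
    qed
  qed
  then have "0 \<le> (\<Sum>i<m. y i * L i)" by (simp add: w_def mult.commute)
  also have "\<dots> \<le> (\<Sum>i<m. z i - y i)"
  proof (rule sum_mono)
    fix i assume "i \<in> {..<m}"
    then have i: "0 < y i" "0 < z i" using ypos zpos by auto
    have "y i * ln (z i / y i) \<le> y i * (z i / y i - 1)"
      using i by (intro mult_left_mono ln_le_minus_one) auto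
    moreover have "y i * ln (z i / y i) = y i * L i" using i by (simp add: L_def ln_div)
    moreover have "y i * (z i / y i - 1) = z i - y i" using i by (simp add: field_simps)
    ultimately show "y i * L i \<le> z i - y i" by simp
  qed
  finally show ?thesis by (simp add: sum_subtractf)
qed

lemma sum_div_nonneg_if_majorized:
  fixes r \<sigma> :: "nat \<Rightarrow> real"
  assumes rpos: "\<And>i. i < n \<Longrightarrow> 0 < r i"
    and rmono: "\<And>i. Suc i < n \<Longrightarrow> r (Suc i) \<le> r i"
    and prefix: "\<And>k. k \<le> n \<Longrightarrow> (\<Sum>i<k. r i) \<le> (\<Sum>i<k. \<sigma> i)"
    and total: "(\<Sum>i<n. r i) = (\<Sum>i<n. \<sigma> i)"
  shows "0 \<le> (\<Sum>i<n. (r i - \<sigma> i) / r i)"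
proof -
  define w where "w i = - 1 / r (min i (n - 1))" for i
  have "(\<Sum>i<n. \<sigma> i - r i) * w n \<le> (\<Sum>i<n. (\<sigma> i - r i) * w i)"
  proof (rule abel_sum_mult_ge)
    show "w (Suc i) \<le> w i" if "i < n" for i
    proof (cases "Suc i < n")
      case True
      then show ?thesis using rmono[OF True] rpos[OF True] by (simp add: w_def frac_le)
    next
      case False
      then have "i = n - 1" using that by simp
      then show ?thesis by (simp add: w_def)
    qed
    show "0 \<le> (\<Sum>i<l. \<sigma> i - r i)" if "l \<le> n" for l using prefix[OF that] by (simp add: sum_subtractf)
  qed
  also have "(\<Sum>i<n. (\<sigma> i - r i) * w i) = (\<Sum>i<n. (r i - \<sigma> i) / r i)"
    by (intro sum.cong) (auto simp: w_def min_def diff_divide_distrib)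
  finally show ?thesis using total by (simp add: sum_subtractf)
qed

text \<open>Multiplicative Karamata inequality: termwise \<open>ln \<sigma> - ln r \<le> (\<sigma> - r) / r\<close> by concavity,
  and the right-hand sides sum to at most \<open>0\<close> by Abel summation.\<close>
lemma prod_le_prod_if_majorized:
  fixes r \<sigma> :: "nat \<Rightarrow> real"
  assumes rpos: "\<And>i. i < n \<Longrightarrow> 0 < r i" and spos: "\<And>i. i < n \<Longrightarrow> 0 < \<sigma> i"
    and rmono: "\<And>i. Suc i < n \<Longrightarrow> r (Suc i) \<le> r i"
    and prefix: "\<And>k. k \<le> n \<Longrightarrow> (\<Sum>i<k. r i) \<le> (\<Sum>i<k. \<sigma> i)"
    and total: "(\<Sum>i<n. r i) = (\<Sum>i<n. \<sigma> i)"
  shows "(\<Prod>i<n. \<sigma> i) \<le> (\<Prod>i<n. r i)"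
    and "(\<Prod>i<n. \<sigma> i) = (\<Prod>i<n. r i) \<Longrightarrow> \<forall>i<n. r i = \<sigma> i"
proof -
  define e where "e i = ln (r i) - ln (\<sigma> i) - (r i - \<sigma> i) / r i" for i
  have e_nonneg: "e i \<ge> 0" if "i < n" for i
  proof -
    have "ln (\<sigma> i / r i) \<le> \<sigma> i / r i - 1" using rpos[OF that] spos[OF that] by (intro ln_le_minus_one) simp
    then show ?thesis using rpos[OF that] spos[OF that] by (simp add: e_def ln_div field_simps)
  qed
  note abel = sum_div_nonneg_if_majorized[OF rpos rmono prefix total]
  have decomp: "ln (\<Prod>i<n. r i) - ln (\<Prod>i<n. \<sigma> i) = (\<Sum>i<n. e i) + (\<Sum>i<n. (r i - \<sigma> i) / r i)"
  proof -
    have "ln (\<Prod>i<n. r i) = (\<Sum>i<n. ln (r i))" "ln (\<Prod>i<n. \<sigma> i) = (\<Sum>i<n. ln (\<sigma> i))"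
      using rpos spos by (auto intro!: ln_prod dest: less_imp_neq[symmetric])
    then show ?thesis by (simp add: e_def sum_subtractf)
  qed
  have e_sum: "(\<Sum>i<n. e i) \<ge> 0" using e_nonneg by (intro sum_nonneg) auto
  have "ln (\<Prod>i<n. \<sigma> i) \<le> ln (\<Prod>i<n. r i)" using decomp e_sum abel by linarith
  moreover have "0 < (\<Prod>i<n. r i)" "0 < (\<Prod>i<n. \<sigma> i)" using rpos spos by (auto intro!: prod_pos)
  ultimately show "(\<Prod>i<n. \<sigma> i) \<le> (\<Prod>i<n. r i)" by simp
  assume "(\<Prod>i<n. \<sigma> i) = (\<Prod>i<n. r i)"
  then have "(\<Sum>i<n. e i) = 0" using decomp e_sum abel by simp
  then have e_zero: "e i = 0" if "i < n" for i
    using e_nonneg that by (subst (asm) sum_nonneg_eq_0_iff) auto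
  show "\<forall>i<n. r i = \<sigma> i"
  proof (intro allI impI)
    fix i assume i: "i < n"
    have "ln (\<sigma> i / r i) = \<sigma> i / r i - 1"
      using e_zero[OF i] rpos[OF i] spos[OF i] by (simp add: e_def ln_div field_simps)
    then have "\<sigma> i / r i = 1" using rpos[OF i] spos[OF i] by (intro ln_eq_minus_one) auto
    then show "r i = \<sigma> i" using rpos[OF i] by simp
  qed
qed

section \<open>Unit fractions with maximal product of denominators\<close>

lemma sum_lessThan_add:
  fixes a b :: nat
  shows "(\<Sum>i<a + b. f i) = (\<Sum>i<a. f i) + (\<Sum>i<b. f (a + i))"
  by (induction b) (auto simp: add.assoc)

lemma prod_lessThan_add:
  fixes a b :: nat
  shows "(\<Prod>i<a + b. f i) = (\<Prod>i<a. f i) * (\<Prod>i<b. f (a + i))"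
  by (induction b) (auto simp: mult.assoc)

lemma sum_inverse_le_of_less:
  fixes x :: "nat \<Rightarrow> nat"
  assumes xpos: "\<And>i. i < J \<Longrightarrow> x i > 0" and g: "g \<ge> 1"
    and less: "(\<Sum>i<J. 1 / real (x i)) < 1 / real g"
  shows "(\<Sum>i<J. 1 / real (x i)) \<le> 1 / real g - 1 / (real g * real (\<Prod>i<J. x i))"
proof -
  define A where "A = (\<Prod>i<J. x i)"
  define N where "N = (\<Sum>i<J. \<Prod>j\<in>{..<J}-{i}. x j)"
  have A_pos: "A > 0" unfolding A_def using xpos by (intro prod_pos) auto
  \<comment> \<open>the sum is \<open>N / A\<close> with \<open>N\<close> an integer, so \<open>N g < A\<close> improves to
    \<open>N g \<le> A - 1\<close>\<close>
  have sum_eq: "(\<Sum>i<J. 1 / real (x i)) = real N / real A"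
  proof -
    have "1 / real (x i) = real (\<Prod>j\<in>{..<J}-{i}. x j) / real A" if "i < J" for i
    proof -
      have "A = x i * (\<Prod>j\<in>{..<J}-{i}. x j)" unfolding A_def using that by (subst prod.remove) auto
      then show ?thesis using xpos[OF that] A_pos by (simp add: field_simps)
    qed
    then show ?thesis by (simp add: N_def sum_divide_distrib)
  qed
  then have "real N / real A < 1 / real g" using less by simp
  then have "real N * real g < real A" using A_pos g by (simp add: field_simps)
  then have "N * g + 1 \<le> A" by (simp add: Suc_le_eq flip: of_nat_mult)
  then have "real N * real g \<le> real A - 1" by (simp flip: of_nat_mult of_nat_Suc)
  then have "real N / real A \<le> 1 / real g - 1 / (real g * real A)" using A_pos g by (simp add: field_simps)
  then show ?thesis using sum_eq by (simp add: A_def)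
qed

lemma sum_inverse_le_if_prefix_prod_gt:
  fixes x \<sigma> :: "nat \<Rightarrow> nat" and a p :: nat
  assumes xpos: "\<And>i. i < b \<Longrightarrow> x i > 0" and spos: "\<And>i. i < b \<Longrightarrow> \<sigma> i > 0"
    and xmono: "\<And>i. Suc i < b \<Longrightarrow> x i \<le> x (Suc i)"
    and ap: "0 < a" "a \<le> p"
    and prod_gt: "\<And>l. 0 < l \<Longrightarrow> l \<le> b \<Longrightarrow> p * (\<Prod>i<l. \<sigma> i) < a * (\<Prod>i<l. x i)"
  shows "(\<Sum>i<b. 1 / real (x i)) \<le> (\<Sum>i<b. 1 / real (\<sigma> i))"
proof (cases "b = 0")
  case False
  define \<rho> where "\<rho> = real a / real p"
  have \<rho>: "0 < \<rho>" "\<rho> \<le> 1" using ap by (auto simp: \<rho>_def)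
  \<comment> \<open>scaling the first term of \<open>1/\<sigma>\<close> by \<open>\<rho>\<close> turns the hypothesis into a comparison
    of prefix products\<close>
  define z where "z i = (if i = 0 then \<rho> else 1) / real (\<sigma> i)" for i
  have "(\<Sum>i<b. 1 / real (x i)) \<le> (\<Sum>i<b. z i)"
  proof (rule sum_le_sum_if_prefix_prod_le)
    show "0 < 1 / real (x i)" if "i < b" for i using xpos[OF that] by simp
    show "0 < z i" if "i < b" for i using spos[OF that] \<rho> by (simp add: z_def)
    show "1 / real (x (Suc i)) \<le> 1 / real (x i)" if "Suc i < b" for i
      using xmono[OF that] xpos[of i] that by (simp add: frac_le)
    show "(\<Prod>i<l. 1 / real (x i)) \<le> (\<Prod>i<l. z i)" if "l \<le> b" for l
    proof (cases "l = 0")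
      case False
      define X where "X = real (\<Prod>i<l. x i)"
      define S where "S = real (\<Prod>i<l. \<sigma> i)"
      have XS: "0 < X" "0 < S" using that spos xpos by (auto simp: X_def S_def intro!: prod_pos)
      have "real p * S \<le> real a * X"
      proof -
        have "p * (\<Prod>i<l. \<sigma> i) \<le> a * (\<Prod>i<l. x i)" using prod_gt[of l] False that by simp
        then show ?thesis unfolding X_def S_def of_nat_mult[symmetric] of_nat_le_iff .
      qed
      then have "1 / X \<le> \<rho> / S" using XS ap by (simp add: \<rho>_def field_simps)
      moreover have "(\<Prod>i<l. z i) = \<rho> / S"
        using False by (simp add: S_def z_def prod_dividef prod.If_cases lessThan_def)
      ultimately show ?thesis by (simp add: X_def prod_dividef)
    qed simp
  qed
  also have "(\<Sum>i<b. z i) = (\<Sum>i<b. 1 / real (\<sigma> i)) + (\<rho> - 1) / real (\<sigma> 0)"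
  proof -
    have "z i = 1 / real (\<sigma> i) + (if i = 0 then (\<rho> - 1) / real (\<sigma> 0) else 0)" for i
      by (simp add: z_def diff_divide_distrib)
    then show ?thesis using False by (simp add: sum.distrib)
  qed
  also have "\<dots> \<le> (\<Sum>i<b. 1 / real (\<sigma> i))"
    using \<rho> spos[of 0] False by (simp add: divide_nonpos_pos)
  finally show ?thesis .
qed simp

text \<open>Curtiss' bound, from \<open>1\<close> generalized to \<open>1/g\<close>.\<close>
lemma sum_inverse_le_sylvester:
  fixes x :: "nat \<Rightarrow> nat"
  assumes g: "g \<ge> 1" and xpos: "\<And>i. i < k \<Longrightarrow> x i > 0"
    and xmono: "\<And>i. Suc i < k \<Longrightarrow> x i \<le> x (Suc i)"
    and less: "(\<Sum>i<k. 1 / real (x i)) < 1 / real g"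
  shows "(\<Sum>i<k. 1 / real (x i)) \<le> 1 / real g - 1 / real (sylv_t g (Suc k))"
proof -
  define A where "A j = (\<Prod>i<j. x i)" for j
  define P where "P j = (\<Prod>i<j. sylv_s g (Suc i))" for j
  have s_pos: "0 < sylv_s g (Suc i)" for i using sylv_s_ge_2[OF g, of "Suc i"] by simp
  define J where "J = Max {j. j \<le> k \<and> A j \<le> P j}"
  have "J \<in> {j. j \<le> k \<and> A j \<le> P j}"
    unfolding J_def by (rule Max_in) (auto intro!: exI[of _ 0] simp: A_def P_def)
  then have Jk: "J \<le> k" and AP: "A J \<le> P J" by auto
  have after_J: "P j < A j" if "J < j" "j \<le> k" for j
    using that Max_ge[of "{j. j \<le> k \<and> A j \<le> P j}" j] unfolding J_def[symmetric] by force
  define b where "b = k - J"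
  have kJb: "k = J + b" using Jk by (simp add: b_def)
  have A_pos: "0 < A J" unfolding A_def using xpos Jk by (intro prod_pos) auto
  have gP: "real (sylv_t g (Suc J)) = real g * real (P J)"
    using mult_prod_sylv_s[of g J] unfolding P_def by (metis of_nat_mult)
  have head: "(\<Sum>i<J. 1 / real (x i)) \<le> (\<Sum>i<J. 1 / real (sylv_s g (Suc i)))"
  proof -
    have "(\<Sum>i<J. 1 / real (x i)) \<le> (\<Sum>i<k. 1 / real (x i))"
      using Jk by (intro sum_mono2) auto
    then have "(\<Sum>i<J. 1 / real (x i)) \<le> 1 / real g - 1 / (real g * real (A J))"
      using less xpos Jk g unfolding A_def by (intro sum_inverse_le_of_less) auto
    also have "\<dots> \<le> 1 / real g - 1 / (real g * real (P J))"
      using AP A_pos g by (intro diff_left_mono divide_left_mono mult_left_mono) auto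
    also have "\<dots> = (\<Sum>i<J. 1 / real (sylv_s g (Suc i)))"
      using sum_inverse_sylv_s[OF g, of J] gP by simp
    finally show ?thesis .
  qed
  have tail: "(\<Sum>i<b. 1 / real (x (J + i))) \<le> (\<Sum>i<b. 1 / real (sylv_s g (Suc (J + i))))"
  proof (rule sum_inverse_le_if_prefix_prod_gt[where a = "A J" and p = "P J"])
    show "P J * (\<Prod>i<l. sylv_s g (Suc (J + i))) < A J * (\<Prod>i<l. x (J + i))"
      if "0 < l" "l \<le> b" for l
      using after_J[of "J + l"] that kJb by (simp add: A_def P_def prod_lessThan_add)
  qed (use xpos xmono kJb A_pos AP s_pos in auto)
  have "(\<Sum>i<k. 1 / real (x i)) \<le> (\<Sum>i<k. 1 / real (sylv_s g (Suc i)))"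
    using head tail unfolding kJb sum_lessThan_add by linarith
  then show ?thesis using sum_inverse_sylv_s[OF g, of k] by simp
qed

lemma prefix_sum_inverse_le_sylvester:
  fixes x :: "nat \<Rightarrow> nat"
  assumes g: "g \<ge> 1" and xpos: "\<And>i. i < n \<Longrightarrow> x i > 0"
    and xmono: "\<And>i. Suc i < n \<Longrightarrow> x i \<le> x (Suc i)"
    and sum_eq: "(\<Sum>i<n. 1 / real (x i)) = 1 / real g" and k: "k < n"
  shows "(\<Sum>i<k. 1 / real (x i)) \<le> (\<Sum>i<k. 1 / real (sylv_s g (Suc i)))"
proof -
  have "0 < (\<Sum>i<n - k. 1 / real (x (k + i)))" using k xpos by (intro sum_pos) (auto simp: lessThan_empty_iff)
  then have "(\<Sum>i<k. 1 / real (x i)) < 1 / real g"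
    using sum_eq sum_lessThan_add[of "\<lambda>i. 1 / real (x i)" k "n - k"] k by simp
  then have "(\<Sum>i<k. 1 / real (x i)) \<le> 1 / real g - 1 / real (sylv_t g (Suc k))"
    using xpos xmono k by (intro sum_inverse_le_sylvester g) auto
  then show ?thesis using sum_inverse_sylv_s[OF g, of k] by simp
qed

text \<open>The reciprocals of the sorted denominators are majorized by
  \<open>1/s_1, \<dots>, 1/s_{n-1}, 1/t_n\<close> (Curtiss' bound), so the multiplicative Karamata
  inequality applies.\<close>
lemma prod_le_sylv_t_square:
  fixes x :: "nat \<Rightarrow> nat"
  assumes g: "g \<ge> 1" and n: "n \<ge> 1" and xpos: "\<And>i. i < n \<Longrightarrow> x i > 0"
    and xmono: "\<And>i. Suc i < n \<Longrightarrow> x i \<le> x (Suc i)"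
    and sum_eq: "(\<Sum>i<n. 1 / real (x i)) = 1 / real g"
  shows "real (\<Prod>i<n. x i) \<le> real (sylv_t g n) ^ 2 / real g"
    and "real (\<Prod>i<n. x i) = real (sylv_t g n) ^ 2 / real g \<Longrightarrow>
           (\<forall>i<n - 1. x i = sylv_s g (Suc i)) \<and> x (n - 1) = sylv_t g n"
proof -
  define r where "r i = 1 / real (x i)" for i
  define \<sigma> where "\<sigma> i = 1 / real (if i < n - 1 then sylv_s g (Suc i) else sylv_t g n)" for i
  have s_pos: "real (sylv_s g (Suc j)) > 0" for j using sylv_s_ge_2[OF g, of "Suc j"] by simp
  have t_pos: "real (sylv_t g n) > 0" using sylv_t_ge_1[OF g n] by simp
  have n_eq: "Suc (n - 1) = n" "Suc (n - Suc 0) = n" using n by simp_all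
  have sum_\<sigma>: "(\<Sum>i<n. \<sigma> i) = 1 / real g"
    using sum_inverse_sylv_s[OF g, of "n - 1"]
    by (subst n_eq(1)[symmetric], simp only: sum.lessThan_Suc) (simp add: \<sigma>_def n_eq)
  have prod_\<sigma>: "(\<Prod>i<n. \<sigma> i) = real g / real (sylv_t g n) ^ 2"
  proof -
    define Q where "Q = (\<Prod>i<n - 1. real (sylv_s g (Suc i)))"
    have Q: "real g * Q = real (sylv_t g n)" "0 < Q"
      using mult_prod_sylv_s[of g "n - 1"] n_eq s_pos unfolding Q_def
      by (metis of_nat_mult of_nat_prod, intro prod_pos) auto
    have "(\<Prod>i<n. \<sigma> i) = 1 / Q * (1 / real (sylv_t g n))"
      by (subst n_eq(1)[symmetric], simp only: prod.lessThan_Suc) (simp add: \<sigma>_def Q_def prod_dividef n_eq)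
    then show ?thesis using Q g by (simp add: power2_eq_square field_simps flip: Q(1))
  qed
  have r_pos: "\<And>i. i < n \<Longrightarrow> 0 < r i" using xpos by (simp add: r_def)
  have \<sigma>_pos: "\<And>i. i < n \<Longrightarrow> 0 < \<sigma> i" using s_pos t_pos by (simp add: \<sigma>_def)
  have r_mono: "r (Suc i) \<le> r i" if "Suc i < n" for i
    using xmono[OF that] xpos[of i] that by (simp add: r_def frac_le)
  have prefix: "(\<Sum>i<k. r i) \<le> (\<Sum>i<k. \<sigma> i)" if "k \<le> n" for k
  proof (cases "k = n")
    case True then show ?thesis using sum_eq sum_\<sigma> by (simp add: r_def)
  next
    case False
    then have "(\<Sum>i<k. r i) \<le> (\<Sum>i<k. 1 / real (sylv_s g (Suc i)))"
      using prefix_sum_inverse_le_sylvester[OF g xpos xmono sum_eq] that unfolding r_def by simp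
    also have "\<dots> = (\<Sum>i<k. \<sigma> i)" using False that by (intro sum.cong) (auto simp: \<sigma>_def)
    finally show ?thesis .
  qed
  have total: "(\<Sum>i<n. r i) = (\<Sum>i<n. \<sigma> i)" using sum_eq sum_\<sigma> by (simp add: r_def)
  note karamata = prod_le_prod_if_majorized[OF r_pos \<sigma>_pos r_mono prefix total]
  have prod_r: "(\<Prod>i<n. r i) = 1 / real (\<Prod>i<n. x i)" by (simp add: r_def prod_dividef)
  have X_pos: "0 < real (\<Prod>i<n. x i)" using xpos by (simp del: of_nat_prod add: prod_pos)
  have iff:
    "real (\<Prod>i<n. x i) \<le> real (sylv_t g n) ^ 2 / real g \<longleftrightarrow> (\<Prod>i<n. \<sigma> i) \<le> (\<Prod>i<n. r i)"
    "real (\<Prod>i<n. x i) = real (sylv_t g n) ^ 2 / real g \<longleftrightarrow> (\<Prod>i<n. \<sigma> i) = (\<Prod>i<n. r i)"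
    unfolding prod_\<sigma> prod_r using X_pos t_pos g by (auto simp: field_simps simp del: of_nat_prod)
  show "real (\<Prod>i<n. x i) \<le> real (sylv_t g n) ^ 2 / real g" using karamata(1) iff(1) by blast
  assume "real (\<Prod>i<n. x i) = real (sylv_t g n) ^ 2 / real g"
  then have r_eq: "\<forall>i<n. r i = \<sigma> i" using karamata(2) iff(2) by blast
  show "(\<forall>i<n - 1. x i = sylv_s g (Suc i)) \<and> x (n - 1) = sylv_t g n"
    using r_eq n by (auto simp: r_def \<sigma>_def)
qed

lemma obtain_sorted_enumeration:
  fixes a :: "'a::finite \<Rightarrow> 'b::linorder"
  obtains e :: "nat \<Rightarrow> 'a" where "bij_betw e {..<CARD('a)} UNIV"
    and "\<And>i. Suc i < CARD('a) \<Longrightarrow> a (e i) \<le> a (e (Suc i))"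
proof -
  obtain E :: "'a list" where E: "set E = UNIV" "distinct E"
    using finite_distinct_list[of "UNIV :: 'a set"] by auto
  define xs where "xs = sort_key a E"
  have xs: "set xs = UNIV" "distinct xs" "length xs = CARD('a)"
  proof -
    show "set xs = UNIV" using E(1) by (simp add: xs_def)
    show "distinct xs" using E(2) by (simp add: xs_def)
    then show "length xs = CARD('a)" using \<open>set xs = UNIV\<close> by (metis distinct_card)
  qed
  show ?thesis
  proof
    show "bij_betw ((!) xs) {..<CARD('a)} UNIV"
      using xs by (intro bij_betw_nth) auto
    show "a (xs ! i) \<le> a (xs ! Suc i)" if "Suc i < CARD('a)" for i
      using sorted_nth_mono[of "map a xs" i "Suc i"] that xs(3) by (simp add: xs_def)
  qed
qed

lemma prod_le_sylv_t_square_finite: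
  fixes a :: "'a::finite \<Rightarrow> nat"
  assumes g: "g \<ge> 1" and a_pos: "\<And>j. a j > 0"
    and sum_eq: "(\<Sum>j\<in>UNIV. 1 / real (a j)) = 1 / real g"
  shows "(\<Prod>j\<in>UNIV. real (a j)) \<le> real (sylv_t g CARD('a)) ^ 2 / real g"
    and "(\<Prod>j\<in>UNIV. real (a j)) = real (sylv_t g CARD('a)) ^ 2 / real g \<Longrightarrow>
      range a = sylv_s g ` {1..<CARD('a)} \<union> {sylv_t g CARD('a)}"
proof -
  define n where "n = CARD('a)"
  obtain e where e: "bij_betw e {..<n} UNIV" and e_mono: "\<And>i. Suc i < n \<Longrightarrow> a (e i) \<le> a (e (Suc i))"
    using obtain_sorted_enumeration[of a] unfolding n_def by blast
  have n: "n \<ge> 1" by (simp add: n_def Suc_le_eq)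
  have sum_e: "(\<Sum>i<n. 1 / real (a (e i))) = 1 / real g"
    using sum.reindex_bij_betw[OF e, of "\<lambda>j. 1 / real (a j)"] sum_eq by simp
  have prod_e: "real (\<Prod>i<n. a (e i)) = (\<Prod>j\<in>UNIV. real (a j))"
    using prod.reindex_bij_betw[OF e, of "\<lambda>j. real (a j)"] by simp
  note sylv = prod_le_sylv_t_square[OF g n, of "a \<circ> e", unfolded o_def, OF a_pos e_mono sum_e]
  show "(\<Prod>j\<in>UNIV. real (a j)) \<le> real (sylv_t g CARD('a)) ^ 2 / real g"
    using sylv(1) prod_e by (simp add: n_def)
  assume "(\<Prod>j\<in>UNIV. real (a j)) = real (sylv_t g CARD('a)) ^ 2 / real g"
  then have vals: "\<forall>i<n - 1. a (e i) = sylv_s g (Suc i)" "a (e (n - 1)) = sylv_t g n"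
    using sylv(2) prod_e by (simp_all add: n_def)
  have "range a = (a \<circ> e) ` {..<n}"
    unfolding image_comp[symmetric] using bij_betw_imp_surj_on[OF e] by simp
  also have "{..<n} = insert (n - 1) {..<n - 1}" using n by auto
  finally have "range a = insert (a (e (n - 1))) ((a \<circ> e) ` {..<n - 1})" by simp
  moreover have "(a \<circ> e) ` {..<n - 1} = sylv_s g ` {1..<n}"
  proof -
    have "(a \<circ> e) ` {..<n - 1} = sylv_s g ` Suc ` {0..<n - 1}"
      using vals(1) by (auto simp: image_image atLeast0LessThan)
    also have "\<dots> = sylv_s g ` {1..<n}" using n by (simp add: image_Suc_atLeastLessThan)
    finally show ?thesis .
  qed
  ultimately show "range a = sylv_s g ` {1..<CARD('a)} \<union> {sylv_t g CARD('a)}"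
    using vals(2) by (auto simp: n_def)
qed

section \<open>Volumes of linear images\<close>

lemma measure_swap_coords_cbox:
  fixes a b :: "real^'n"
  shows "measure lebesgue ((\<lambda>v. \<chi> i. v $ Transposition.transpose m n i) ` cbox a b)
    = measure lebesgue (cbox a b)"
proof (cases "cbox a b = {}")
  case False
  let ?h = "\<lambda>v::real^'n. \<chi> i. v $ Transposition.transpose m n i"
  have "?h ` cbox a b = cbox (?h a) (?h b)"
    by (auto simp: image_iff lambda_swap_Galois mem_box_cart) (metis transpose_involutory)+
  moreover have "?h ` cbox a b \<noteq> {}" using False by blast
  ultimately show ?thesis
    using prod.permute[OF permutes_swap_id, where S = UNIV and g = "\<lambda>i. (b - a) $ i", symmetric]
    by (simp add: content_cbox_cart False)
qed simp

lemma measure_shear_cbox: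
  fixes a b :: "real^'n"
  assumes "m \<noteq> n"
  shows "measure lebesgue ((\<lambda>v. \<chi> i. if i = m then v $ m + v $ n else v $ i) ` cbox a b)
    = measure lebesgue (cbox a b)"
proof (cases "cbox a b = {}")
  case False
  let ?h = "\<lambda>v::real^'n. \<chi> i. if i = m then v $ m + v $ n else v $ i"
  \<comment> \<open>translate the box so that its \<open>n\<close>-th lower bound is \<open>0\<close>,
    as \<open>measure_shear_interval\<close> requires\<close>
  define v :: "real^'n" where "v = (\<chi> i. if i = n then - a $ n else 0)"
  have "?h ` cbox a b = (+) (\<chi> i. if i = m \<or> i = n then a $ n else 0) ` ?h ` (+) v ` cbox a b"
    using assms unfolding image_comp o_def v_def by (force simp: vec_eq_iff)
  then have "measure lebesgue (?h ` cbox a b) = measure lebesgue (?h ` cbox (v + a) (v + b))"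
    by (simp add: measure_translation cbox_translation)
  also have "\<dots> = measure lebesgue (cbox (v + a) (v + b))"
    using assms False by (intro measure_shear_interval) (simp_all add: v_def cbox_translation)
  also have "\<dots> = measure lebesgue (cbox a b)"
    by (metis cbox_translation measure_translation)
  finally show ?thesis .
qed simp

definition det_scales_measure :: "(real^'n \<Rightarrow> real^'n) \<Rightarrow> bool" where
  "det_scales_measure f \<longleftrightarrow> (\<forall>S \<in> lmeasurable. f ` S \<in> lmeasurable
    \<and> measure lebesgue (f ` S) = \<bar>det (matrix f)\<bar> * measure lebesgue S)"

lemma det_scales_measure_if_unimodular:
  fixes f :: "real^'n \<Rightarrow> real^'n"
  assumes "linear f" "\<bar>det (matrix f)\<bar> = 1"
    and "\<And>a b. measure lebesgue (f ` cbox a b) = measure lebesgue (cbox a b)"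
  shows "det_scales_measure f"
  unfolding det_scales_measure_def
proof
  fix S :: "(real^'n) set" assume "S \<in> lmeasurable"
  then show "f ` S \<in> lmeasurable \<and> measure lebesgue (f ` S) = \<bar>det (matrix f)\<bar> * measure lebesgue S"
    using measure_linear_sufficient[OF assms(1), of S 1] assms(2,3) by simp
qed

lemma det_scales_measure_swap_coords:
  "det_scales_measure (\<lambda>v::real^'n. \<chi> i. v $ Transposition.transpose m n i)"
proof (rule det_scales_measure_if_unimodular)
  let ?h = "\<lambda>v::real^'n. \<chi> i. v $ Transposition.transpose m n i"
  have "(\<chi> i j. if Transposition.transpose m n i = j then 1 else 0)
      = (\<chi> i j. if j = Transposition.transpose m n i then 1 else (0::real))"
    by (auto intro!: Cart_lambda_cong)
  then have "matrix ?h = transpose (\<chi> i j. mat 1 $ i $ Transposition.transpose m n j)"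
    by (auto simp: matrix_eq transpose_def axis_def mat_def matrix_def)
  then show "\<bar>det (matrix ?h)\<bar> = 1"
    by (simp add: det_permute_columns permutes_swap_id sign_swap_id abs_mult)
  show "linear ?h" by (rule linearI) (simp_all add: plus_vec_def scaleR_vec_def)
qed (rule measure_swap_coords_cbox)

lemma det_scales_measure_shear:
  assumes "m \<noteq> n"
  shows "det_scales_measure (\<lambda>v::real^'n. \<chi> i. if i = m then v $ m + v $ n else v $ i)"
proof (rule det_scales_measure_if_unimodular)
  let ?h = "\<lambda>v::real^'n. \<chi> i. if i = m then v $ m + v $ n else v $ i"
  have "matrix ?h = (\<chi> k. if k = m then row m (mat 1) + 1 *s row n (mat 1) else row k (mat 1 :: real^'n^'n))"
    using assms by (auto simp: matrix_def vec_eq_iff row_def mat_def axis_def)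
  then have "det (matrix ?h) = 1" using det_row_operation[OF assms, of "mat 1" 1] by simp
  then show "\<bar>det (matrix ?h)\<bar> = 1" by simp
  show "linear ?h" by (rule linearI) (auto simp: algebra_simps vec_eq_iff)
qed (rule measure_shear_cbox[OF assms])

text \<open>\<open>measure_linear_image\<close> in \<open>HOL-Analysis\<close> is stated only for index types of class
  \<open>wellorder\<close>; the reduction to elementary matrices does not need the order.\<close>
lemma measure_linear_image_cart:
  fixes f :: "real^'n \<Rightarrow> real^'n"
  assumes "linear f" "S \<in> lmeasurable"
  shows "f ` S \<in> lmeasurable"
    and "measure lebesgue (f ` S) = \<bar>det (matrix f)\<bar> * measure lebesgue S"
proof -
  have "det_scales_measure f"
  proof (rule induct_linear_elementary[OF assms(1)])
    fix f g :: "real^'n \<Rightarrow> real^'n"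
    assume lin: "linear f" "linear g" and "det_scales_measure f" "det_scales_measure g"
    moreover have "(f \<circ> g) ` S = f ` (g ` S)" for S by (simp add: image_comp)
    ultimately show "det_scales_measure (f \<circ> g)"
      unfolding det_scales_measure_def by (simp add: matrix_compose[OF lin(2,1)] det_mul abs_mult)
  next
    fix f :: "real^'n \<Rightarrow> real^'n" and i
    assume f: "linear f" "\<And>x. f x $ i = 0"
    then have "\<not> inj f"
      by (metis linear_injective_imp_surjective one_neq_zero surjE vec_component)
    then have "det (matrix f) = 0" "negligible (f ` S)" for S
      using det_nz_iff_inj[OF f(1)] negligible_linear_singular_image[OF f(1)] by auto
    then show "det_scales_measure f"
      unfolding det_scales_measure_def by (auto intro: negligible_imp_measurable negligible_imp_measure0)
  next
    show "det_scales_measure (\<lambda>x. \<chi> i. c i * x $ i)" for c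
      by (auto simp: det_scales_measure_def measurable_stretch measure_stretch axis_def matrix_def det_diagonal)
  qed (simp_all add: det_scales_measure_swap_coords det_scales_measure_shear)
  with assms(2) show "f ` S \<in> lmeasurable" "measure lebesgue (f ` S) = \<bar>det (matrix f)\<bar> * measure lebesgue S"
    unfolding det_scales_measure_def by auto
qed

section \<open>Matrices, duality and vertices\<close>

lemma det_Rats: "(\<forall>i j. A$i$j \<in> \<rat>) \<Longrightarrow> det (A::real^'n^'n) \<in> \<rat>"
  unfolding det_def by (intro Rats_sum Rats_mult Rats_prod) (auto simp: Rats_of_int)

lemma rat_vec_if_matrix_mult_rat:
  fixes A :: "real^'n^'n"
  assumes A: "\<forall>i j. A$i$j \<in> \<rat>" and d: "det A \<noteq> 0" and b: "rat_vec (A *v x)"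
  shows "rat_vec x"
proof -
  have x: "x = (\<chi> k. det (\<chi> i j. if j = k then (A *v x)$i else A$i$j) / det A)"
    using cramer[OF d, of x "A *v x"] by simp
  have "det (\<chi> i j. if j = k then (A *v x)$i else A$i$j) \<in> \<rat>" for k
    using A b by (intro det_Rats) (auto simp: rat_vec_def)
  moreover have "det A \<in> \<rat>" using A by (rule det_Rats)
  ultimately show ?thesis unfolding rat_vec_def by (subst x) (auto intro: Rats_divide)
qed

lemma det_nonzero_if_interior_in_range:
  fixes M :: "real^'n^'n"
  assumes "0 \<in> interior S" "S \<subseteq> range (\<lambda>x. M *v x)"
  shows "det M \<noteq> 0"
proof -
  have "affine hull S \<subseteq> range (\<lambda>x. M *v x)"
    using assms(2) linear_subspace_image[OF matrix_vector_mul_linear[of M] subspace_UNIV]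
    by (intro hull_minimal) (auto intro: subspace_imp_affine)
  then have "surj (\<lambda>x. M *v x)" using affine_hull_nonempty_interior[of S] assms(1) by auto
  then obtain B where "M ** B = mat 1" using matrix_right_invertible_surjective by blast
  then have "det M * det B = 1" by (metis det_I det_mul)
  then show ?thesis by auto
qed

lemma obtain_inverse_transpose:
  fixes M :: "real^'n^'n"
  assumes "det M \<noteq> 0"
  obtains K where "transpose M ** K = mat 1"
proof -
  have "invertible (transpose M)" using assms by (simp add: invertible_det_nz)
  then show ?thesis using that unfolding invertible_def by blast
qed

lemma inner_matrix_inverse_transpose:
  fixes M K :: "real^'n^'n"
  assumes "transpose M ** K = mat 1"
  shows "inner (M *v x) (K *v y) = inner x y"
proof -
  have "inner (M *v x) (K *v y) = inner (K *v y) (M *v x)" by (simp add: inner_commute)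
  also have "\<dots> = inner ((K *v y) v* M) x" by (simp add: dot_lmul_matrix)
  also have "(K *v y) v* M = transpose M *v (K *v y)" by simp
  also have "\<dots> = y" by (simp only: matrix_vector_mul_assoc assms matrix_vector_mul_lid)
  finally show ?thesis by (simp add: inner_commute)
qed

lemma polar_dual_convex_hull: "polar_dual (convex hull X) = {u. \<forall>v\<in>X. inner u v \<ge> -1}"
proof
  show "polar_dual (convex hull X) \<subseteq> {u. \<forall>v\<in>X. inner u v \<ge> -1}"
    unfolding polar_dual_def using hull_subset[of X convex] by blast
  show "{u. \<forall>v\<in>X. inner u v \<ge> -1} \<subseteq> polar_dual (convex hull X)"
  proof
    fix u assume u: "u \<in> {u. \<forall>v\<in>X. inner u v \<ge> -1}"
    have "convex hull X \<subseteq> {v. -1 \<le> u \<bullet> v}"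
      using u by (intro hull_minimal convex_halfspace_ge) auto
    then show "u \<in> polar_dual (convex hull X)" unfolding polar_dual_def by auto
  qed
qed

lemma polar_dual_linear_image:
  fixes M K :: "real^'n^'n"
  assumes "transpose M ** K = mat 1"
  shows "polar_dual ((\<lambda>x. M *v x) ` T) = (\<lambda>y. K *v y) ` polar_dual T"
proof -
  have K: "transpose M ** K = mat 1" "K ** transpose M = mat 1"
    using assms matrix_left_right_inverse by blast+
  have ip: "inner u (M *v x) = inner (transpose M *v u) x" for u x
    by (simp add: dot_lmul_matrix)
  have L: "polar_dual ((\<lambda>x. M *v x) ` T) = {u. transpose M *v u \<in> polar_dual T}"
    unfolding polar_dual_def by (auto simp: ip)
  show ?thesis unfolding L
  proof (rule set_eqI, rule iffI)
    fix u assume "u \<in> {u. transpose M *v u \<in> polar_dual T}"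
    moreover have "u = K *v (transpose M *v u)" by (simp only: matrix_vector_mul_assoc K(2) matrix_vector_mul_lid)
    ultimately show "u \<in> (\<lambda>y. K *v y) ` polar_dual T" by auto
  next
    fix u assume "u \<in> (\<lambda>y. K *v y) ` polar_dual T"
    then obtain y where "y \<in> polar_dual T" "u = K *v y" by auto
    moreover have "transpose M *v (K *v y) = y" by (simp only: matrix_vector_mul_assoc K(1) matrix_vector_mul_lid)
    ultimately show "u \<in> {u. transpose M *v u \<in> polar_dual T}" by simp
  qed
qed

lemma extreme_point_inj_linear:
  assumes f: "linear f" "inj f"
  shows "(f x extreme_point_of f ` S) \<longleftrightarrow> (x extreme_point_of S)"
proof -
  have "f x \<in> f ` S \<longleftrightarrow> x \<in> S" using f(2) by (auto simp: inj_def)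
  moreover have "(\<forall>a\<in>f ` S. \<forall>b\<in>f ` S. f x \<notin> open_segment a b)
      \<longleftrightarrow> (\<forall>a\<in>S. \<forall>b\<in>S. x \<notin> open_segment a b)"
  proof -
    have "f x \<in> open_segment (f a) (f b) \<longleftrightarrow> x \<in> open_segment a b" for a b
      using open_segment_linear_image[OF f, of a b] f(2) by (auto simp: inj_def)
    then show ?thesis by auto
  qed
  ultimately show ?thesis unfolding extreme_point_of_def by blast
qed

lemma vertices_linear_image:
  assumes f: "linear f" "inj f"
  shows "vertices (f ` S) = f ` vertices S"
proof
  show "vertices (f ` S) \<subseteq> f ` vertices S"
  proof
    fix y assume y: "y \<in> vertices (f ` S)"
    then have "y \<in> f ` S" unfolding vertices_def extreme_point_of_def by auto
    then obtain x where x: "y = f x" by auto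
    then show "y \<in> f ` vertices S" using y extreme_point_inj_linear[OF f] unfolding vertices_def by auto
  qed
  show "f ` vertices S \<subseteq> vertices (f ` S)"
    using extreme_point_inj_linear[OF f] unfolding vertices_def by auto
qed

lemma vertices_convex_hull_affine_independent:
  "\<not> affine_dependent V \<Longrightarrow> vertices (convex hull V) = V"
  unfolding vertices_def using extreme_point_of_convex_hull_affine_independent by auto

definition cols_matrix :: "('n \<Rightarrow> real^'m) \<Rightarrow> real^'n^'m" where
  "cols_matrix w = (\<chi> r c. w c $ r)"

lemma cols_matrix_mult: "cols_matrix w *v x = (\<Sum>c\<in>UNIV. x$c *\<^sub>R w c)"
  by (simp add: cols_matrix_def vec_eq_iff matrix_vector_mult_def sum_component mult.commute)

lemma cols_matrix_axis: "cols_matrix w *v axis i 1 = w i"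
proof -
  have "(\<Sum>c\<in>UNIV. axis i 1 $ c *\<^sub>R w c) = (\<Sum>c\<in>UNIV. if c = i then w c else 0)"
    by (intro sum.cong) (auto simp: axis_def)
  then show ?thesis unfolding cols_matrix_mult by simp
qed

section \<open>The simplices with vertices the unit vectors and an apex\<close>

lemma Basis_cart_real: "(Basis :: (real^'n) set) = range (\<lambda>i. axis i 1)"
  by (auto simp: Basis_vec_def)

lemma sum_Basis_cart: "sum f (Basis :: (real^'n) set) = (\<Sum>i\<in>UNIV. f (axis i 1))"
proof -
  have "inj (\<lambda>i::'n. axis i (1::real))" by (auto simp: inj_def axis_eq_axis)
  then show ?thesis unfolding Basis_cart_real by (simp add: sum.reindex)
qed

lemma std_simplex_cart:
  "convex hull (insert 0 Basis) = {z :: real^'n. (\<forall>i. 0 \<le> z$i) \<and> (\<Sum>i\<in>UNIV. z$i) \<le> 1}"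
  unfolding std_simplex sum_Basis_cart by (auto simp: Basis_cart_real inner_axis)

lemma lmeasurable_std_simplex: "convex hull (insert 0 Basis) \<in> (lmeasurable :: (real^'n) set set)"
  by (intro lmeasurable_compact finite_imp_compact_convex_hull) auto

lemma measure_std_simplex:
  "measure lebesgue (convex hull (insert 0 Basis) :: (real^'n) set) = 1 / fact CARD('n)"
proof -
  have "compact (convex hull (insert 0 Basis) :: (real^'n) set)"
    by (intro finite_imp_compact_convex_hull) auto
  then show ?thesis
    using content_std_simplex[where 'a = "real^'n"]
    by (subst measure_completion) (auto dest: compact_imp_closed)
qed

definition apex_simplex :: "real^'n \<Rightarrow> (real^'n) set" where
  "apex_simplex q = convex hull (range (\<lambda>i. axis i (1::real)) \<union> {-q})"

lemma compact_apex_simplex: "compact (apex_simplex (q :: real^'n))"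
  unfolding apex_simplex_def by (intro finite_imp_compact_convex_hull) auto

lemma cols_matrix_image_apex_simplex:
  fixes w :: "'n \<Rightarrow> real^'n"
  shows "(\<lambda>x. cols_matrix w *v x) ` apex_simplex p
    = convex hull (insert (- (\<Sum>i\<in>UNIV. p$i *\<^sub>R w i)) (range w))"
proof -
  have "cols_matrix w *v (-p) = - (\<Sum>i\<in>UNIV. p$i *\<^sub>R w i)"
    by (simp add: cols_matrix_mult sum_negf)
  then have "(\<lambda>x. cols_matrix w *v x) ` (range (\<lambda>i. axis i 1) \<union> {-p})
      = insert (- (\<Sum>i\<in>UNIV. p$i *\<^sub>R w i)) (range w)"
    by (auto simp: cols_matrix_axis image_iff)
  then show ?thesis
    unfolding apex_simplex_def convex_hull_linear_image[OF matrix_vector_mul_linear] by simp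
qed

definition col_add_matrix :: "real^'n \<Rightarrow> 'n set \<Rightarrow> real^'n^'n" where
  "col_add_matrix q S = (\<chi> i j. (if i = j then 1 else 0) + (if j \<in> S then q$i else 0))"

lemma col_add_matrix_mult:
  fixes q x :: "real^'n"
  shows "col_add_matrix q S *v x = x + (\<Sum>j\<in>S. x$j) *\<^sub>R q"
proof -
  have "((if i = j then 1 else 0) + (if j \<in> S then q$i else 0)) * x$j
      = (if i = j then x$j else 0) + q$i * (if j \<in> S then x$j else 0)" for i j :: 'n
    by (simp add: algebra_simps)
  then have "(\<Sum>j\<in>UNIV. ((if i = j then 1 else 0) + (if j \<in> S then q$i else 0)) * x$j)
      = x$i + (\<Sum>j\<in>S. x$j) * q$i" for i
    by (simp add: sum.distrib sum.inter_restrict[symmetric] sum_distrib_left[symmetric] mult.commute)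
  then show ?thesis by (simp add: vec_eq_iff col_add_matrix_def matrix_vector_mult_def)
qed

lemma det_col_add_matrix:
  fixes q :: "real^'n"
  assumes q: "\<And>i. q$i \<ge> 0"
  shows "det (col_add_matrix q S) = 1 + (\<Sum>i\<in>S. q$i)"
  using finite[of S]
proof (induction S rule: finite_induct)
  case empty
  have "col_add_matrix q {} = mat 1" by (simp add: col_add_matrix_def mat_def vec_eq_iff)
  then show ?case by simp
next
  case (insert k S)
  define \<sigma> where "\<sigma> = (\<Sum>i\<in>S. q$i)"
  have \<sigma>: "\<sigma> \<ge> 0" unfolding \<sigma>_def using q by (intro sum_nonneg) auto
  \<comment> \<open>the new column \<open>axis k 1 + q\<close> is the image of \<open>x\<close>, so Cramer's rule applies\<close>
  define x where "x = axis k 1 + (1 / (1 + \<sigma>)) *\<^sub>R q"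
  have "(\<Sum>j\<in>S. x$j) = (\<Sum>j\<in>S. q$j / (1 + \<sigma>))"
    using insert.hyps by (intro sum.cong) (auto simp: x_def axis_def)
  then have "(\<Sum>j\<in>S. x$j) = \<sigma> / (1 + \<sigma>)" by (simp add: \<sigma>_def sum_divide_distrib)
  then have "col_add_matrix q S *v x = axis k 1 + q"
    using \<sigma> by (simp add: col_add_matrix_mult x_def vec_eq_iff field_simps)
  then have "col_add_matrix q (insert k S)
      = (\<chi> i j. if j = k then (col_add_matrix q S *v x)$i else col_add_matrix q S $i$j)"
    using insert.hyps by (auto simp: vec_eq_iff col_add_matrix_def axis_def)
  then have "det (col_add_matrix q (insert k S)) = x$k * det (col_add_matrix q S)"
    by (simp add: cramer_lemma)
  also have "\<dots> = 1 + (\<Sum>i\<in>insert k S. q$i)"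
    using insert.IH insert.hyps \<sigma> by (simp add: x_def \<sigma>_def field_simps)
  finally show ?case .
qed

lemma apex_simplex_eq_affine_image:
  fixes q :: "real^'n"
  shows "apex_simplex q = (+) (-q) ` ((\<lambda>x. col_add_matrix q UNIV *v x) ` (convex hull (insert 0 Basis)))"
proof -
  have lin: "linear (\<lambda>x. col_add_matrix q UNIV *v x)" by (rule matrix_vector_mul_linear)
  have col: "col_add_matrix q UNIV *v axis i 1 = axis i 1 + q" for i
    by (simp add: vec_eq_iff col_add_matrix_def matrix_vector_mult_def axis_def if_distrib cong: if_cong)
  have "(+) (-q) ` ((\<lambda>x. col_add_matrix q UNIV *v x) ` (convex hull (insert 0 Basis)))
      = convex hull ((+) (-q) ` ((\<lambda>x. col_add_matrix q UNIV *v x) ` insert 0 Basis))"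
    unfolding convex_hull_linear_image[OF lin] convex_hull_translation ..
  also have "(+) (-q) ` ((\<lambda>x. col_add_matrix q UNIV *v x) ` insert 0 Basis) = range (\<lambda>i. axis i (1::real)) \<union> {-q}"
    by (auto simp: Basis_cart_real image_image col)
  finally show ?thesis by (simp add: apex_simplex_def)
qed

lemma measure_apex_simplex:
  fixes q :: "real^'n"
  assumes q: "\<And>i. q$i \<ge> 0"
  shows "measure lebesgue (apex_simplex q) = (1 + sum (\<lambda>i. q$i) UNIV) / fact CARD('n)"
proof -
  have "measure lebesgue (apex_simplex q) = measure lebesgue ((\<lambda>x. col_add_matrix q UNIV *v x) ` (convex hull (insert 0 Basis)))"
    unfolding apex_simplex_eq_affine_image by (rule measure_translation)
  also have "\<dots> = \<bar>det (col_add_matrix q UNIV)\<bar> * measure lebesgue (convex hull (insert 0 Basis) :: (real^'n) set)"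
    using measure_linear_image_cart(2)[OF matrix_vector_mul_linear lmeasurable_std_simplex]
    by (simp add: matrix_of_matrix_vector_mul)
  also have "det (col_add_matrix q UNIV) = 1 + sum (\<lambda>i. q$i) UNIV" by (rule det_col_add_matrix[OF q])
  also have "\<bar>1 + sum (\<lambda>i. q$i) UNIV\<bar> = 1 + sum (\<lambda>i. q$i) UNIV"
    using q by (intro abs_of_nonneg add_nonneg_nonneg sum_nonneg) auto
  finally show ?thesis by (simp add: measure_std_simplex)
qed

lemma polar_dual_apex_simplex:
  fixes q :: "real^'n"
  assumes q: "\<And>i. q$i > 0"
  defines "c \<equiv> (\<lambda>i. (1 + sum (\<lambda>j. q$j) UNIV) / q$i)"
  shows "polar_dual (apex_simplex q) = (+) (- (\<chi> i. 1)) ` ((\<lambda>x. \<chi> k. c k * x$k) ` (convex hull (insert 0 Basis)))"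
proof -
  define s where "s = sum (\<lambda>j. q$j) UNIV"
  have s: "s \<ge> 0" unfolding s_def using q by (intro sum_nonneg) (auto intro: less_imp_le)
  have c_pos: "c i > 0" for i using q[of i] s by (simp add: c_def s_def)
  define z where "z u = (\<chi> k. (u$k + 1) / c k)" for u :: "real^'n"
  have sum_z: "(\<Sum>i\<in>UNIV. z u $ i) = (inner u q + s) / (1 + s)" for u
  proof -
    have "(\<Sum>i\<in>UNIV. z u $ i) = (\<Sum>i\<in>UNIV. (u$i * q$i + q$i) / (1 + s))"
      using q by (intro sum.cong) (auto simp: z_def c_def s_def field_simps)
    then show ?thesis by (simp add: sum_divide_distrib[symmetric] sum.distrib inner_vec_def s_def)
  qed
  have mem: "u \<in> polar_dual (apex_simplex q) \<longleftrightarrow> z u \<in> convex hull (insert 0 Basis)" for u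
  proof -
    have "u \<in> polar_dual (apex_simplex q) \<longleftrightarrow> (\<forall>i. u$i \<ge> -1) \<and> inner u q \<le> 1"
      unfolding apex_simplex_def polar_dual_convex_hull by (auto simp: inner_axis)
    moreover have "u$i \<ge> -1 \<longleftrightarrow> 0 \<le> z u $ i" for i
      using c_pos[of i] by (auto simp: z_def zero_le_divide_iff)
    moreover have "inner u q \<le> 1 \<longleftrightarrow> (\<Sum>i\<in>UNIV. z u $ i) \<le> 1"
      using s by (simp add: sum_z divide_le_eq_1)
    ultimately show ?thesis by (simp add: std_simplex_cart)
  qed
  have c_nonzero: "c i \<noteq> 0" for i using c_pos[of i] by simp
  have "u = - (\<chi> i. 1) + (\<chi> k. c k * z u $ k)" for u using c_nonzero by (simp add: vec_eq_iff z_def)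
  moreover have "z (- (\<chi> i. 1) + (\<chi> k. c k * x$k)) = x" for x using c_nonzero by (simp add: vec_eq_iff z_def)
  ultimately show ?thesis using mem by (auto simp: image_iff) metis
qed

lemma measure_polar_dual_apex_simplex:
  fixes q :: "real^'n"
  assumes q: "\<And>i. q$i > 0"
  shows "polar_dual (apex_simplex q) \<in> lmeasurable"
    and "measure lebesgue (polar_dual (apex_simplex q))
      = (1 + sum (\<lambda>i. q$i) UNIV) ^ CARD('n) / prod (\<lambda>i. q$i) UNIV / fact CARD('n)"
proof -
  define c where "c = (\<lambda>i. (1 + sum (\<lambda>j. q$j) UNIV) / q$i)"
  have eq: "polar_dual (apex_simplex q)
      = (+) (- (\<chi> i. 1)) ` ((\<lambda>x. \<chi> k. c k * x$k) ` (convex hull (insert 0 Basis)))"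
    unfolding c_def by (rule polar_dual_apex_simplex[OF q])
  show "polar_dual (apex_simplex q) \<in> lmeasurable"
    unfolding eq by (intro measurable_translation measurable_stretch lmeasurable_std_simplex)
  have "0 \<le> sum (\<lambda>j. q$j) UNIV" using q by (intro sum_nonneg) (auto intro: less_imp_le)
  moreover have "0 < prod (\<lambda>i. q$i) UNIV" using q by (intro prod_pos) auto
  ultimately show "measure lebesgue (polar_dual (apex_simplex q))
      = (1 + sum (\<lambda>i. q$i) UNIV) ^ CARD('n) / prod (\<lambda>i. q$i) UNIV / fact CARD('n)"
    unfolding eq measure_translation measure_stretch[OF lmeasurable_std_simplex]
    by (simp add: measure_std_simplex c_def prod_dividef)
qed

lemma vol_product_linear_apex_simplex:
  fixes M :: "real^'n^'n" and q :: "real^'n"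
  assumes M: "det M \<noteq> 0" and q: "\<And>i. q$i > 0"
  shows "Vol ((\<lambda>x. M *v x) ` apex_simplex q) * Vol (polar_dual ((\<lambda>x. M *v x) ` apex_simplex q))
          = (1 + sum (\<lambda>i. q$i) UNIV) ^ (CARD('n) + 1) / prod (\<lambda>i. q$i) UNIV"
proof -
  define s where "s = sum (\<lambda>j. q$j) UNIV"
  obtain K where K: "transpose M ** K = mat 1" using obtain_inverse_transpose[OF M] .
  have "\<bar>det M\<bar> * \<bar>det K\<bar> = 1" using det_mul[of "transpose M" K] K by (simp flip: abs_mult)
  moreover have "Vol ((\<lambda>x. M *v x) ` apex_simplex q) = \<bar>det M\<bar> * (1 + s)"
    using measure_linear_image_cart(2)[OF matrix_vector_mul_linear[of M] lmeasurable_compact[OF compact_apex_simplex[of q]]]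
      measure_apex_simplex[of q] q
    by (simp add: Vol_def matrix_of_matrix_vector_mul s_def less_imp_le)
  moreover have "Vol (polar_dual ((\<lambda>x. M *v x) ` apex_simplex q))
      = \<bar>det K\<bar> * ((1 + s) ^ CARD('n) / prod (\<lambda>i. q$i) UNIV)"
    unfolding polar_dual_linear_image[OF K]
    using measure_linear_image_cart(2)[OF matrix_vector_mul_linear[of K] measure_polar_dual_apex_simplex(1)[OF q]]
      measure_polar_dual_apex_simplex(2)[OF q]
    by (simp add: Vol_def matrix_of_matrix_vector_mul s_def)
  ultimately show ?thesis by (simp add: s_def mult_ac)
qed

definition apex_dual_vertices :: "real^'n \<Rightarrow> (real^'n) set" where
  "apex_dual_vertices q = insert (- (\<chi> i. 1))
    (range (\<lambda>i. - (\<chi> i. 1) + ((1 + sum (\<lambda>j. q$j) UNIV) / q$i) *\<^sub>R axis i 1))"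

lemma polar_dual_apex_simplex_eq_hull:
  fixes q :: "real^'n"
  assumes q: "\<And>i. q$i > 0"
  shows "polar_dual (apex_simplex q) = convex hull (apex_dual_vertices q)"
proof -
  define c where "c = (\<lambda>i. (1 + sum (\<lambda>j. q$j) UNIV) / q$i)"
  have lin: "linear (\<lambda>x::real^'n. \<chi> k. c k * x$k)"
    by (rule linearI) (auto simp: vec_eq_iff algebra_simps)
  have "polar_dual (apex_simplex q) = (+) (- (\<chi> i. 1)) ` ((\<lambda>x. \<chi> k. c k * x$k) ` (convex hull (insert 0 Basis)))"
    unfolding c_def by (rule polar_dual_apex_simplex[OF q])
  also have "\<dots> = convex hull ((+) (- (\<chi> i. 1)) ` ((\<lambda>x. \<chi> k. c k * x$k) ` insert 0 Basis))"
    unfolding convex_hull_linear_image[OF lin] convex_hull_translation ..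
  also have "(+) (- (\<chi> i. 1)) ` ((\<lambda>x. \<chi> k. c k * x$k) ` insert 0 Basis) = apex_dual_vertices q"
  proof -
    have "(\<chi> k. c k * axis i 1 $ k) = c i *\<^sub>R axis i 1" for i by (simp add: vec_eq_iff axis_def)
    moreover have "(\<chi> k. c k * (0::real^'n) $ k) = 0" by (simp add: vec_eq_iff)
    ultimately show ?thesis unfolding apex_dual_vertices_def c_def Basis_cart_real by (auto simp: image_image)
  qed
  finally show ?thesis .
qed

lemma affine_independent_apex_dual_vertices:
  fixes q :: "real^'n"
  assumes q: "\<And>i. q$i > 0"
  shows "\<not> affine_dependent (apex_dual_vertices q)"
proof -
  define s where "s = sum (\<lambda>j. q$j) UNIV"
  have s0: "s \<ge> 0" unfolding s_def using q by (intro sum_nonneg) (auto intro: less_imp_le)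
  define c where "c = (\<lambda>i. (1 + s) / q$i)"
  have c0: "c i \<noteq> 0" for i using q[of i] s0 by (simp add: c_def)
  define a :: "real^'n" where "a = - (\<chi> i. (1::real))"
  define S where "S = range (\<lambda>i. a + c i *\<^sub>R axis i (1::real))"
  have U: "apex_dual_vertices q = insert a S" unfolding apex_dual_vertices_def S_def a_def c_def s_def ..
  have aS: "a \<notin> S" using c0 by (auto simp: S_def axis_eq_axis)
  have T: "(\<lambda>x. -a + x) ` S = range (\<lambda>i. c i *\<^sub>R axis i (1::real))"
    unfolding S_def by (auto simp: image_image)
  have "independent (range (\<lambda>i. c i *\<^sub>R axis i (1::real)))"
  proof (rule pairwise_orthogonal_independent)
    show "pairwise orthogonal (range (\<lambda>i. c i *\<^sub>R axis i (1::real)))"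
      unfolding pairwise_def orthogonal_def by (auto simp: inner_axis_axis)
    show "0 \<notin> range (\<lambda>i. c i *\<^sub>R axis i (1::real))" using c0 by (auto simp: axis_eq_axis)
  qed
  then show ?thesis unfolding U affine_dependent_iff_dependent[OF aS] T by simp
qed

lemma vertices_polar_dual_matrix_image_apex_simplex:
  fixes M K :: "real^'n^'n" and q :: "real^'n"
  assumes K: "transpose M ** K = mat 1" and q: "\<And>i. q$i > 0"
  shows "vertices (polar_dual ((\<lambda>x. M *v x) ` apex_simplex q)) = (\<lambda>y. K *v y) ` apex_dual_vertices q"
proof -
  have "inj (\<lambda>y. K *v y)"
    by (metis (no_types, lifting) K injI matrix_vector_mul_assoc matrix_vector_mul_lid)
  then show ?thesis
    unfolding polar_dual_linear_image[OF K] polar_dual_apex_simplex_eq_hull[OF q]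
    by (simp add: vertices_linear_image matrix_vector_mul_linear
        vertices_convex_hull_affine_independent affine_independent_apex_dual_vertices[OF q])
qed

section \<open>IP simplices and the Gorenstein index\<close>

lemma IP_simplex_normal_form:
  fixes \<Delta> :: "(real^'n) set"
  assumes "IP_simplex \<Delta>"
  obtains M q where "det M \<noteq> 0" "\<forall>i j. M$i$j \<in> \<rat>" "\<forall>i. q$i > 0" "rat_vec q"
    "\<Delta> = (\<lambda>x. M *v x) ` apex_simplex q"
    "vertices \<Delta> = (\<lambda>x. M *v x) ` (range (\<lambda>i. axis i 1) \<union> {-q})"
    "\<forall>v \<in> vertices \<Delta>. rat_vec v"
proof -
  obtain V where V: "finite V" "card V = CARD('n) + 1" "\<not> affine_dependent V"
      "\<forall>v\<in>V. rat_vec v" "\<Delta> = convex hull V" "0 \<in> interior \<Delta>"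
    using assms unfolding IP_simplex_def by blast
  \<comment> \<open>barycentric coordinates \<open>u\<close> of the origin; one vertex \<open>v0\<close> becomes the apex\<close>
  have "0 \<in> rel_interior (convex hull V)" using V(5,6) interior_subset_rel_interior by blast
  then obtain u where u: "\<forall>x\<in>V. 0 < u x" "(\<Sum>x\<in>V. u x *\<^sub>R x) = 0"
    unfolding rel_interior_convex_hull_explicit[OF V(3)] by blast
  obtain v0 where v0: "v0 \<in> V" using V(2) by fastforce
  have "card (V - {v0}) = CARD('n)" using V(1,2) v0 by simp
  then obtain f where f: "bij_betw f (UNIV::'n set) (V - {v0})"
    using finite_same_card_bij[of "UNIV::'n set" "V - {v0}"] V(1) by auto
  define M where "M = cols_matrix f"
  define q where "q = (\<chi> i. u (f i) / u v0)"
  have fV: "f i \<in> V" for i using f by (auto simp: bij_betw_def)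
  have u0: "u v0 > 0" using u v0 by auto
  have "(\<Sum>x\<in>V. u x *\<^sub>R x) = u v0 *\<^sub>R v0 + (\<Sum>x\<in>V - {v0}. u x *\<^sub>R x)"
    using V(1) v0 by (simp add: sum.remove)
  also have "(\<Sum>x\<in>V - {v0}. u x *\<^sub>R x) = (\<Sum>i\<in>UNIV. u (f i) *\<^sub>R f i)"
    using sum.reindex_bij_betw[OF f, of "\<lambda>x. u x *\<^sub>R x"] by simp
  finally have "u v0 *\<^sub>R v0 + (\<Sum>i\<in>UNIV. u (f i) *\<^sub>R f i) = 0" using u(2) by simp
  then have "(\<Sum>i\<in>UNIV. u (f i) *\<^sub>R f i) = - u v0 *\<^sub>R v0" by (simp add: eq_neg_iff_add_eq_0 add.commute)
  moreover have "(\<Sum>i\<in>UNIV. q$i *\<^sub>R f i) = (1 / u v0) *\<^sub>R (\<Sum>i\<in>UNIV. u (f i) *\<^sub>R f i)"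
    by (simp add: q_def scaleR_sum_right)
  ultimately have apex: "- (\<Sum>i\<in>UNIV. q$i *\<^sub>R f i) = v0" using u0 by simp
  have V_eq: "V = insert v0 (range f)" using f v0 by (auto simp: bij_betw_def)
  have hull: "\<Delta> = (\<lambda>x. M *v x) ` apex_simplex q"
    using V(5) unfolding M_def cols_matrix_image_apex_simplex apex V_eq .
  have images: "(\<lambda>x. M *v x) ` (range (\<lambda>i. axis i 1) \<union> {-q}) = V"
  proof -
    have "M *v (-q) = v0" using apex by (simp add: M_def cols_matrix_mult sum_negf)
    then show ?thesis using V_eq by (auto simp: M_def cols_matrix_axis image_iff)
  qed
  have dM: "det M \<noteq> 0" using det_nonzero_if_interior_in_range[OF V(6)] hull by auto
  have Mrat: "\<forall>i j. M$i$j \<in> \<rat>" using V(4) fV unfolding M_def cols_matrix_def rat_vec_def by auto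
  have "rat_vec (-q)"
    using rat_vec_if_matrix_mult_rat[OF Mrat dM, of "-q"] images V(4) by auto
  then have "rat_vec q" by (simp add: rat_vec_def)
  moreover have "\<forall>i. q$i > 0" using u u0 fV by (simp add: q_def)
  moreover have "vertices \<Delta> = V" using V(3,5) by (simp add: vertices_convex_hull_affine_independent)
  ultimately show ?thesis using that dM Mrat hull images V(4) by auto
qed

lemma Rats_common_denom:
  fixes R :: "real set"
  assumes "finite R" "R \<subseteq> \<rat>"
  shows "\<exists>k::nat. k > 0 \<and> (\<forall>r\<in>R. real k * r \<in> \<int>)"
  using assms
proof (induction R rule: finite_induct)
  case empty then show ?case by (intro exI[of _ 1]) auto
next
  case (insert r R)
  then obtain k where k: "k > 0" "\<forall>r\<in>R. real k * r \<in> \<int>" by auto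
  have "r \<in> \<rat>" using insert by auto
  then obtain a b where ab: "b > 0" "r = of_int a / of_int b" by (rule Rats_cases') auto
  define k' where "k' = k * nat b"
  have "k' > 0" using k ab by (simp add: k'_def)
  moreover have "real k' * r \<in> \<int>" using ab by (simp add: k'_def)
  moreover have "real k' * r' \<in> \<int>" if "r' \<in> R" for r'
  proof -
    have rk: "real k' = real k * of_int b" using ab by (simp add: k'_def)
    have "real k' * r' = of_int b * (real k * r')" unfolding rk by (simp add: algebra_simps)
    then show ?thesis using k(2) that by (metis Ints_mult Ints_of_int)
  qed
  ultimately show ?case by auto
qed

lemma vec_common_denom:
  fixes X :: "(real^'n) set"
  assumes "finite X" "\<forall>x\<in>X. rat_vec x"
  shows "\<exists>k::nat. k > 0 \<and> (\<forall>x\<in>X. int_vec (real k *\<^sub>R x))"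
proof -
  have "finite ((\<lambda>(x,i). x$i) ` (X \<times> UNIV))" using assms(1) by auto
  moreover have "(\<lambda>(x,i). x$i) ` (X \<times> UNIV) \<subseteq> \<rat>" using assms(2) by (auto simp: rat_vec_def)
  ultimately obtain k where "k > 0" "\<forall>r\<in>(\<lambda>(x,i). x$i) ` (X \<times> UNIV). real k * r \<in> \<int>"
    using Rats_common_denom by blast
  then show ?thesis unfolding int_vec_def by (intro exI[of _ k]) auto
qed

lemma gQ_clears_denominators:
  fixes P :: "(real^'n) set"
  assumes "finite (vertices P)" "\<forall>v\<in>vertices P. rat_vec v"
  shows "gQ P > 0" "\<forall>v\<in>vertices P. int_vec (real (gQ P) *\<^sub>R v)"
proof -
  obtain k where "k > 0 \<and> (\<forall>v\<in>vertices P. int_vec (real k *\<^sub>R v))" using vec_common_denom[OF assms] by blast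
  then have "gQ P > 0 \<and> (\<forall>v\<in>vertices P. int_vec (real (gQ P) *\<^sub>R v))"
    unfolding gQ_def by (rule LeastI)
  then show "gQ P > 0" "\<forall>v\<in>vertices P. int_vec (real (gQ P) *\<^sub>R v)" by auto
qed

lemma int_vec_inner: "int_vec a \<Longrightarrow> int_vec b \<Longrightarrow> inner a (b :: real^'n) \<in> \<int>"
  unfolding int_vec_def inner_vec_def by (intro Ints_sum Ints_mult) auto

lemma gorenstein_index_pairing:
  fixes P :: "(real^'n) set"
  assumes "finite (vertices P)" "\<forall>v\<in>vertices P. rat_vec v"
    and "finite (vertices (polar_dual P))" "\<forall>w\<in>vertices (polar_dual P). rat_vec w"
  shows "gorenstein_index P \<ge> 1"
    and "\<And>v w. v \<in> vertices P \<Longrightarrow> w \<in> vertices (polar_dual P)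
      \<Longrightarrow> real (gorenstein_index P) * inner v w \<in> \<int>"
proof -
  note P = gQ_clears_denominators[OF assms(1,2)] and P' = gQ_clears_denominators[OF assms(3,4)]
  show "gorenstein_index P \<ge> 1" using P(1) P'(1) by (simp add: gorenstein_index_def)
  fix v w assume "v \<in> vertices P" "w \<in> vertices (polar_dual P)"
  then have "inner (real (gQ P) *\<^sub>R v) (real (gQ (polar_dual P)) *\<^sub>R w) \<in> \<int>"
    using P(2) P'(2) by (intro int_vec_inner) auto
  then show "real (gorenstein_index P) * inner v w \<in> \<int>"
    by (simp add: gorenstein_index_def mult.assoc mult.left_commute)
qed

lemma sum_UNIV_option:
  fixes f :: "'a::finite option \<Rightarrow> 'b::comm_monoid_add"
  shows "(\<Sum>j\<in>UNIV. f j) = f None + (\<Sum>i\<in>UNIV. f (Some i))"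
  unfolding UNIV_option_conv by (subst sum.insert) (auto simp: sum.reindex)

lemma prod_UNIV_option:
  fixes f :: "'a::finite option \<Rightarrow> 'b::comm_monoid_mult"
  shows "(\<Prod>j\<in>UNIV. f j) = f None * (\<Prod>i\<in>UNIV. f (Some i))"
  unfolding UNIV_option_conv by (subst prod.insert) (auto simp: prod.reindex)

definition apex_vertex :: "real^'n \<Rightarrow> 'n option \<Rightarrow> real^'n" where
  "apex_vertex q j = (case j of None \<Rightarrow> -q | Some i \<Rightarrow> axis i 1)"

text \<open>The reciprocals of the barycentric coordinates of the origin in \<open>apex_simplex q\<close>,
  scaled by \<open>g\<close>.\<close>
definition apex_weight :: "real \<Rightarrow> real^'n \<Rightarrow> 'n option \<Rightarrow> real" where
  "apex_weight g q j = g * (1 + (\<Sum>i\<in>UNIV. q$i)) / (case j of None \<Rightarrow> 1 | Some i \<Rightarrow> q$i)"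

lemma range_apex_vertex: "range (apex_vertex q) = range (\<lambda>i. axis i 1) \<union> {-q}"
  by (auto simp: apex_vertex_def UNIV_option_conv image_image)

lemma apex_weight_pos: "g > 0 \<Longrightarrow> (\<And>i. q$i > 0) \<Longrightarrow> apex_weight g q j > 0"
  using sum_nonneg[of UNIV "\<lambda>i. q$i"] by (cases j) (auto simp: apex_weight_def less_imp_le)

lemma sum_inverse_apex_weight:
  assumes "g > 0" "\<And>i. q$i > 0"
  shows "(\<Sum>j\<in>UNIV. 1 / apex_weight g q j) = 1 / g"
proof -
  have "0 \<le> (\<Sum>i\<in>UNIV. q$i)" using assms(2) by (intro sum_nonneg) (auto intro: less_imp_le)
  then show ?thesis using assms
    by (simp add: sum_UNIV_option apex_weight_def sum_divide_distrib[symmetric] add_divide_distrib[symmetric])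
qed

lemma prod_apex_weight:
  fixes q :: "real^'n"
  shows "(\<Prod>j\<in>UNIV. apex_weight g q j)
    = g ^ (CARD('n) + 1) * ((1 + (\<Sum>i\<in>UNIV. q$i)) ^ (CARD('n) + 1) / (\<Prod>i\<in>UNIV. q$i))"
  by (simp add: prod_UNIV_option apex_weight_def prod_dividef power_mult_distrib)

lemma sum_inverse_apex_weight_scaleR_vertex:
  assumes "g > 0" "\<And>i. q$i > 0"
  shows "(\<Sum>j\<in>UNIV. (1 / apex_weight g q j) *\<^sub>R apex_vertex q j) = 0"
proof -
  define c where "c = g * (1 + (\<Sum>i\<in>UNIV. q$i))"
  have "(1 / c) *\<^sub>R q = (1 / c) *\<^sub>R (\<Sum>i\<in>UNIV. q$i *\<^sub>R axis i (1::real))"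
    by (simp add: vec_eq_iff sum_component axis_def if_distrib cong: if_cong)
  also have "\<dots> = (\<Sum>i\<in>UNIV. (q$i / c) *\<^sub>R axis i 1)" by (simp add: scaleR_sum_right)
  finally show ?thesis using assms
    by (simp add: sum_UNIV_option apex_weight_def apex_vertex_def c_def)
qed

lemma rat_vec_matrix_inverse_transpose_mult:
  fixes M K :: "real^'n^'n"
  assumes "\<forall>i j. M$i$j \<in> \<rat>" "det M \<noteq> 0" "transpose M ** K = mat 1" "rat_vec w"
  shows "rat_vec (K *v w)"
proof (rule rat_vec_if_matrix_mult_rat[of "transpose M"])
  have "transpose M *v (K *v w) = w" by (simp only: matrix_vector_mul_assoc assms(3) matrix_vector_mul_lid)
  then show "rat_vec (transpose M *v (K *v w))" using assms(4) by simp
  show "\<forall>i j. transpose M $ i $ j \<in> \<rat>" using assms(1) by (simp add: transpose_def)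
  show "det (transpose M) \<noteq> 0" using assms(2) by simp
qed

lemma rat_vec_apex_dual_vertices:
  assumes "rat_vec q" "w \<in> apex_dual_vertices q"
  shows "rat_vec w"
proof -
  have "(\<Sum>j\<in>UNIV. q$j) \<in> \<rat>" using assms(1) unfolding rat_vec_def by (intro Rats_sum) auto
  then show ?thesis using assms unfolding apex_dual_vertices_def rat_vec_def
    by (auto simp: axis_def intro!: Rats_add Rats_mult Rats_divide)
qed

text \<open>The Gorenstein index clears the denominators of all pairings between vertices of \<open>\<Delta>\<close>
  and of its dual. Pairing the apex \<open>M *v -q\<close> with the image of the dual vertex \<open>-1\<close>,
  and \<open>M *v axis i 1\<close> with that of the \<open>i\<close>-th other dual vertex, gives the weights.\<close>
lemma gorenstein_integrality:
  fixes \<Delta> :: "(real^'n) set" and M :: "real^'n^'n" and q :: "real^'n"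
  assumes dM: "det M \<noteq> 0" and Mrat: "\<forall>i j. M$i$j \<in> \<rat>" and q: "\<forall>i. q$i > 0" and qrat: "rat_vec q"
    and \<Delta>: "\<Delta> = (\<lambda>x. M *v x) ` apex_simplex q"
    and vertices: "vertices \<Delta> = (\<lambda>x. M *v x) ` (range (\<lambda>i. axis i 1) \<union> {-q})"
    and vertices_rat: "\<forall>v\<in>vertices \<Delta>. rat_vec v"
  shows "gorenstein_index \<Delta> \<ge> 1" and "\<And>j. apex_weight (gorenstein_index \<Delta>) q j \<in> \<int>"
proof -
  define s where "s = (\<Sum>j\<in>UNIV. q$j)"
  define g where "g = real (gorenstein_index \<Delta>)"
  obtain K where K: "transpose M ** K = mat 1" using obtain_inverse_transpose[OF dM] .
  have dual_vertices: "vertices (polar_dual \<Delta>) = (\<lambda>y. K *v y) ` apex_dual_vertices q"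
    unfolding \<Delta> using vertices_polar_dual_matrix_image_apex_simplex[OF K] q by blast
  have dual_rat: "\<forall>w\<in>vertices (polar_dual \<Delta>). rat_vec w"
    using dual_vertices rat_vec_apex_dual_vertices[OF qrat] rat_vec_matrix_inverse_transpose_mult[OF Mrat dM K]
    by auto
  have "finite (vertices \<Delta>)" "finite (vertices (polar_dual \<Delta>))"
    using vertices dual_vertices by (simp_all add: apex_dual_vertices_def)
  note pairing = gorenstein_index_pairing[OF this(1) vertices_rat this(2) dual_rat, folded g_def]
  have pair: "g * inner x y \<in> \<int>" if "x \<in> range (\<lambda>i. axis i 1) \<union> {-q}" "y \<in> apex_dual_vertices q" for x y
  proof -
    have "M *v x \<in> vertices \<Delta>" "K *v y \<in> vertices (polar_dual \<Delta>)"
      using that vertices dual_vertices by blast+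
    from pairing(2)[OF this] show ?thesis by (simp add: inner_matrix_inverse_transpose[OF K])
  qed
  show "gorenstein_index \<Delta> \<ge> 1" by (rule pairing(1))
  fix j
  show "apex_weight (gorenstein_index \<Delta>) q j \<in> \<int>"
  proof (cases j)
    case None
    have "g * inner (-q) (- (\<chi> i. 1)) \<in> \<int>" by (rule pair) (auto simp: apex_dual_vertices_def)
    then show ?thesis using None by (simp add: apex_weight_def inner_vec_def distrib_left g_def Ints_add)
  next
    case (Some i)
    have "g * inner (axis i 1) (- (\<chi> i. 1) + ((1 + s) / q$i) *\<^sub>R axis i (1::real)) \<in> \<int>"
      by (rule pair) (auto simp: apex_dual_vertices_def s_def)
    then have "g * ((1 + s) / q$i) - g \<in> \<int>"
      by (simp add: inner_axis' inner_add_right right_diff_distrib)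
    then show ?thesis using Some Ints_add[of _ g] by (force simp: apex_weight_def g_def s_def)
  qed
qed

lemma IP_simplex_weights:
  fixes \<Delta> :: "(real^'n) set"
  assumes "IP_simplex \<Delta>"
  obtains a :: "'n option \<Rightarrow> nat" and v :: "'n option \<Rightarrow> real^'n"
  where "gorenstein_index \<Delta> \<ge> 1" and "\<And>j. a j > 0"
    and "(\<Sum>j\<in>UNIV. 1 / real (a j)) = 1 / real (gorenstein_index \<Delta>)"
    and "Vol \<Delta> * Vol (polar_dual \<Delta>)
      = (\<Prod>j\<in>UNIV. real (a j)) / real (gorenstein_index \<Delta>) ^ (CARD('n) + 1)"
    and "(\<Sum>j\<in>UNIV. (1 / real (a j)) *\<^sub>R v j) = 0"
    and "\<Delta> = convex hull (range v)" and "\<And>j. rat_vec (v j)"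
proof -
  obtain M q where M: "det M \<noteq> 0" "\<forall>i j. M$i$j \<in> \<rat>" and q: "\<forall>i. q$i > 0" "rat_vec q"
    and \<Delta>: "\<Delta> = (\<lambda>x. M *v x) ` apex_simplex q"
    and vertices: "vertices \<Delta> = (\<lambda>x. M *v x) ` (range (\<lambda>i. axis i 1) \<union> {-q})"
    and vertices_rat: "\<forall>v\<in>vertices \<Delta>. rat_vec v"
    using IP_simplex_normal_form[OF assms] by blast
  note integral = gorenstein_integrality[OF M q \<Delta> vertices vertices_rat]
  define g where "g = real (gorenstein_index \<Delta>)"
  define a where "a j = nat \<lfloor>apex_weight g q j\<rfloor>" for j
  define v where "v j = M *v apex_vertex q j" for j
  have g: "g > 0" using integral(1) by (simp add: g_def)
  have "apex_weight g q j \<in> \<int>" for j using integral(2) by (simp add: g_def)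
  then have a: "real (a j) = apex_weight g q j" for j
    using apex_weight_pos[OF g, of q j] q by (simp add: a_def of_int_floor)
  have vol: "Vol \<Delta> * Vol (polar_dual \<Delta>) = (\<Prod>j\<in>UNIV. real (a j)) / g ^ (CARD('n) + 1)"
    unfolding \<Delta> a prod_apex_weight using vol_product_linear_apex_simplex[OF M(1)] q g by simp
  have relation: "(\<Sum>j\<in>UNIV. (1 / real (a j)) *\<^sub>R v j) = 0"
    using sum_inverse_apex_weight_scaleR_vertex[OF g, of q] q
    by (simp add: a v_def vec.sum[symmetric] matrix_vector_mult_scaleR[symmetric])
  have "range v = (\<lambda>y. M *v y) ` (range (\<lambda>i. axis i 1) \<union> {-q})"
    by (simp add: v_def image_image[symmetric] range_apex_vertex)
  then have hull: "range v = vertices \<Delta>" "\<Delta> = convex hull (range v)"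
    by (simp add: vertices, simp add: \<Delta> apex_simplex_def convex_hull_linear_image[OF matrix_vector_mul_linear])
  show ?thesis
  proof (rule that[of a v])
    show "a j > 0" for j using a[of j] apex_weight_pos[OF g, of q j] q by (metis of_nat_0_less_iff)
    show "(\<Sum>j\<in>UNIV. 1 / real (a j)) = 1 / real (gorenstein_index \<Delta>)"
      using sum_inverse_apex_weight[OF g, of q] q by (simp add: a g_def)
    show "\<Delta> = convex hull (range v)" "rat_vec (v j)" for j using hull vertices_rat by auto
  qed (use integral(1) vol relation in \<open>simp_all add: g_def\<close>)
qed

section \<open>The extremal simplex\<close>

lemma coord_idx_bij: "bij_betw (coord_idx :: 'n::finite \<Rightarrow> nat) UNIV {1..CARD('n)}"
proof -
  have "\<exists>f. bij_betw f (UNIV::'n set) {1..CARD('n)}" by (intro finite_same_card_bij) auto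
  then show ?thesis unfolding coord_idx_def by (rule someI_ex)
qed

lemma coord_idx_range: "coord_idx (i::'n::finite) \<in> {1..CARD('n)}"
  using coord_idx_bij by (auto simp: bij_betw_def)

lemma sum_coord_idx: "(\<Sum>i\<in>UNIV. h (coord_idx (i::'n::finite))) = (\<Sum>k<CARD('n). h (Suc k))"
  using sum.reindex_bij_betw[OF coord_idx_bij, of h] by (simp add: sum.atLeast1_atMost_eq)

lemma prod_coord_idx: "(\<Prod>i\<in>UNIV. h (coord_idx (i::'n::finite))) = (\<Prod>k<CARD('n). h (Suc k))"
  using prod.reindex_bij_betw[OF coord_idx_bij, of h] by (simp add: prod.atLeast1_atMost_eq)

definition extremal_apex :: "nat \<Rightarrow> real^'n" where
  "extremal_apex g = (\<chi> i. real (sylv_t g (CARD('n) + 1)) / real (sylv_s g (coord_idx i)))"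

lemma extremal_simplex_eq_apex_simplex: "extremal_simplex g = apex_simplex (extremal_apex g :: real^'n)"
proof -
  have "(\<chi> i. - real (sylv_t g (CARD('n) + 1)) / real (sylv_s g (coord_idx (i::'n))))
      = - extremal_apex g"
    by (simp add: extremal_apex_def vec_eq_iff)
  then show ?thesis unfolding extremal_simplex_def apex_simplex_def by simp
qed

lemma extremal_apex_pos: "g \<ge> 1 \<Longrightarrow> (extremal_apex g :: real^'n) $ i > 0"
  using sylv_t_ge_1[of g "CARD('n) + 1"] sylv_s_ge_2[of g "coord_idx i"] coord_idx_range[of i]
  by (simp add: extremal_apex_def)

lemma vol_product_extremal:
  fixes N :: "real^'n^'n"
  assumes g: "g \<ge> 1" and N: "det N \<noteq> 0"
  shows "Vol ((\<lambda>x. N *v x) ` extremal_simplex g) * Vol (polar_dual ((\<lambda>x. N *v x) ` extremal_simplex g))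
     = real (sylv_t g (CARD('n) + 1)) ^ 2 / real g ^ (CARD('n) + 2)"
proof -
  define d where "d = CARD('n)"
  define t where "t = real (sylv_t g (d + 1))"
  have t_pos: "t > 0" using sylv_t_ge_1[OF g, of "d + 1"] by (simp add: t_def)
  have "1 + (\<Sum>i\<in>UNIV. (extremal_apex g :: real^'n) $ i) = 1 + t * (\<Sum>k<d. 1 / real (sylv_s g (Suc k)))"
    unfolding extremal_apex_def d_def t_def
    using sum_coord_idx[of "\<lambda>k. real (sylv_t g (CARD('n) + 1)) / real (sylv_s g k)", where 'n='n]
    by (simp add: sum_distrib_left)
  also have "\<dots> = t / real g" using sum_inverse_sylv_s[OF g, of d] t_pos by (simp add: t_def field_simps)
  finally have sum_p: "1 + (\<Sum>i\<in>UNIV. (extremal_apex g :: real^'n) $ i) = t / real g" .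
  have "(\<Prod>i\<in>UNIV. (extremal_apex g :: real^'n) $ i) = t ^ d / real (\<Prod>k<d. sylv_s g (Suc k))"
    unfolding extremal_apex_def d_def t_def
    using prod_coord_idx[of "\<lambda>k. real (sylv_t g (CARD('n) + 1)) / real (sylv_s g k)", where 'n='n]
    by (simp add: prod_dividef)
  also have "real (\<Prod>k<d. sylv_s g (Suc k)) = t / real g"
  proof -
    have "real g * real (\<Prod>k<d. sylv_s g (Suc k)) = t"
      using mult_prod_sylv_s[of g d] unfolding t_def by (metis Suc_eq_plus1 of_nat_mult)
    then show ?thesis using g by (simp add: field_simps)
  qed
  finally have prod_p: "(\<Prod>i\<in>UNIV. (extremal_apex g :: real^'n) $ i) = t ^ d * real g / t"
    using g by simp
  have "Vol ((\<lambda>x. N *v x) ` extremal_simplex g) * Vol (polar_dual ((\<lambda>x. N *v x) ` extremal_simplex g))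
      = (t / real g) ^ (d + 1) / (t ^ d * real g / t)"
    unfolding extremal_simplex_eq_apex_simplex
    using vol_product_linear_apex_simplex[OF N extremal_apex_pos[OF g]] sum_p prod_p by (simp add: d_def)
  also have "\<dots> = t ^ 2 / real g ^ (d + 2)"
    using t_pos g by (simp add: field_simps power_add power2_eq_square)
  finally show ?thesis by (simp add: t_def d_def)
qed

text \<open>Once the weights are the Sylvester numbers, the barycentric relation expresses the vertex
  of weight \<open>t_{g,d+1}\<close> through the others exactly as the last column of \<open>P\<close> does, so the
  simplex is the image of the extremal one under the matrix whose columns are the other vertices.\<close>
lemma convex_hull_eq_image_extremal_simplex:
  fixes v :: "'n option \<Rightarrow> real^'n" and a :: "'n option \<Rightarrow> nat"
  assumes g: "g \<ge> 1" and d: "CARD('n) \<ge> 2"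
    and a: "range a = sylv_s g ` {1..<CARD('n) + 1} \<union> {sylv_t g (CARD('n) + 1)}"
    and relation: "(\<Sum>j\<in>UNIV. (1 / real (a j)) *\<^sub>R v j) = 0"
  obtains w :: "'n \<Rightarrow> real^'n" where "range w \<subseteq> range v"
    and "convex hull (range v) = (\<lambda>x. cols_matrix w *v x) ` extremal_simplex g"
proof -
  define t where "t = sylv_t g (CARD('n) + 1)"
  define target :: "'n option \<Rightarrow> nat" where
    "target j = (case j of None \<Rightarrow> t | Some i \<Rightarrow> sylv_s g (coord_idx i))" for j
  have "card (range a) = CARD('n option)" using card_sylvester_values[OF g d] a by simp
  then have a_inj: "inj a" by (simp add: eq_card_imp_inj_on)
  have range_target: "range target = range a"
  proof -
    have "range target = insert t (sylv_s g ` coord_idx ` (UNIV :: 'n set))"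
      by (simp add: target_def UNIV_option_conv image_image)
    also have "coord_idx ` (UNIV :: 'n set) = {1..<CARD('n) + 1}" using coord_idx_bij[where 'n='n]
      by (auto simp: bij_betw_def)
    finally show ?thesis using a by (auto simp: t_def)
  qed
  define \<phi> where "\<phi> = inv a \<circ> target"
  have a_\<phi>: "a (\<phi> j) = target j" for j
    using range_target by (metis \<phi>_def comp_apply f_inv_into_f rangeI)
  have "inj target" using card_sylvester_values[OF g d] range_target a
    by (simp add: eq_card_imp_inj_on)
  then have "inj \<phi>" using a_\<phi> by (metis injI inj_eq)
  then have \<phi>: "bij \<phi>" by (simp add: finite_UNIV_inj_surj bij_def)
  define w where "w i = v (\<phi> (Some i))" for i
  define p :: "real^'n" where "p = extremal_apex g"
  have "0 = (\<Sum>j\<in>UNIV. (1 / real (target j)) *\<^sub>R v (\<phi> j))"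
    using relation sum.reindex_bij_betw[OF \<phi>[unfolded bij_betw_def[symmetric]], of "\<lambda>j. (1 / real (a j)) *\<^sub>R v j"]
    by (simp add: a_\<phi>)
  also have "\<dots> = (1 / real t) *\<^sub>R (v (\<phi> None) + (\<Sum>i\<in>UNIV. p$i *\<^sub>R w i))"
    using sylv_t_ge_1[OF g, of "CARD('n) + 1"]
    by (simp add: sum_UNIV_option target_def p_def extremal_apex_def w_def t_def scaleR_sum_right scaleR_add_right)
  finally have apex: "v (\<phi> None) = - (\<Sum>i\<in>UNIV. p$i *\<^sub>R w i)"
    using sylv_t_ge_1[OF g, of "CARD('n) + 1"] by (simp add: t_def eq_neg_iff_add_eq_0)
  have "range v = v ` range \<phi>" using bij_is_surj[OF \<phi>] by simp
  also have "\<dots> = insert (v (\<phi> None)) (range w)" by (simp add: UNIV_option_conv w_def image_image)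
  finally have hull: "convex hull (range v) = (\<lambda>x. cols_matrix w *v x) ` extremal_simplex g"
    by (simp add: extremal_simplex_eq_apex_simplex cols_matrix_image_apex_simplex apex p_def)
  show ?thesis by (rule that[OF _ hull]) (auto simp: w_def)
qed

lemma GLZ_equiv_refl:
  fixes A :: "(real^'n) set"
  shows "GLZ_equiv A A"
  unfolding GLZ_equiv_def
proof (intro exI conjI)
  show "\<forall>i j. (mat 1 :: real^'n^'n) $ i $ j \<in> \<int>" by (simp add: mat_def)
qed simp_all

lemma vol_product_image_extremal_simplex:
  fixes H U :: "real^'n^'n"
  assumes "g \<ge> 1" "det H \<noteq> 0" "\<bar>det U\<bar> = 1"
  shows "Vol ((\<lambda>x. U *v x) ` (\<lambda>x. H *v x) ` extremal_simplex g)
      * Vol (polar_dual ((\<lambda>x. U *v x) ` (\<lambda>x. H *v x) ` extremal_simplex g))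
    = real (sylv_t g (CARD('n) + 1)) ^ 2 / real g ^ (CARD('n) + 2)"
  using vol_product_extremal[OF assms(1), of "U ** H"] assms(2,3)
  by (simp add: image_image matrix_vector_mul_assoc det_mul)

lemma divide_power_Suc_iff:
  fixes x y g :: real
  assumes "g > 0"
  shows "x / g ^ (n + 1) = y / g ^ (n + 2) \<longleftrightarrow> x = y / g"
    and "x / g ^ (n + 1) \<le> y / g ^ (n + 2) \<longleftrightarrow> x \<le> y / g"
  using assms by (auto simp: field_simps)

lemma vol_product_IP_simplex_le:
  fixes \<Delta> :: "(real^'n) set"
  assumes "IP_simplex \<Delta>" and g: "g = gorenstein_index \<Delta>"
  shows "Vol \<Delta> * Vol (polar_dual \<Delta>) \<le> real (sylv_t g (CARD('n) + 1)) ^ 2 / real g ^ (CARD('n) + 2)"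
proof -
  obtain a :: "'n option \<Rightarrow> nat" where g1: "g \<ge> 1" and a: "\<And>j. a j > 0"
    "(\<Sum>j\<in>UNIV. 1 / real (a j)) = 1 / real g"
    and vol: "Vol \<Delta> * Vol (polar_dual \<Delta>) = (\<Prod>j\<in>UNIV. real (a j)) / real g ^ (CARD('n) + 1)"
    using IP_simplex_weights[OF assms(1)] unfolding g[symmetric] by blast
  have "real g > 0" using g1 by simp
  then show ?thesis
    unfolding vol divide_power_Suc_iff(2)[OF \<open>real g > 0\<close>]
    using prod_le_sylv_t_square_finite(1)[OF g1 a] by simp
qed

lemma IP_simplex_extremal_if_vol_product_eq:
  fixes \<Delta> :: "(real^'n) set"
  assumes d: "CARD('n) \<ge> 2" and IP: "IP_simplex \<Delta>" and g: "g = gorenstein_index \<Delta>"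
    and eq: "Vol \<Delta> * Vol (polar_dual \<Delta>) = real (sylv_t g (CARD('n) + 1)) ^ 2 / real g ^ (CARD('n) + 2)"
  shows "\<exists>H::real^'n^'n. GLQ H \<and> GLZ_equiv \<Delta> ((\<lambda>x. H *v x) ` extremal_simplex g)"
proof -
  obtain a :: "'n option \<Rightarrow> nat" and v where g1: "g \<ge> 1" and a: "\<And>j. a j > 0"
    "(\<Sum>j\<in>UNIV. 1 / real (a j)) = 1 / real g"
    and vol: "Vol \<Delta> * Vol (polar_dual \<Delta>) = (\<Prod>j\<in>UNIV. real (a j)) / real g ^ (CARD('n) + 1)"
    and relation: "(\<Sum>j\<in>UNIV. (1 / real (a j)) *\<^sub>R v j) = 0"
    and \<Delta>: "\<Delta> = convex hull (range v)" and v_rat: "\<And>j. rat_vec (v j)"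
    using IP_simplex_weights[OF IP] unfolding g[symmetric] by blast
  have "real g > 0" using g1 by simp
  then have "(\<Prod>j\<in>UNIV. real (a j)) = real (sylv_t g (CARD('n option))) ^ 2 / real g"
    using eq unfolding vol divide_power_Suc_iff(1)[OF \<open>real g > 0\<close>] by simp
  then have "range a = sylv_s g ` {1..<CARD('n) + 1} \<union> {sylv_t g (CARD('n) + 1)}"
    using prod_le_sylv_t_square_finite(2)[OF g1 a] by simp
  then obtain w :: "'n \<Rightarrow> real^'n" where w: "range w \<subseteq> range v"
    and hull: "\<Delta> = (\<lambda>x. cols_matrix w *v x) ` extremal_simplex g"
    using convex_hull_eq_image_extremal_simplex[OF g1 d _ relation] unfolding \<Delta> by blast
  have "0 \<in> interior \<Delta>" using IP unfolding IP_simplex_def by blast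
  then have "det (cols_matrix w) \<noteq> 0"
    by (rule det_nonzero_if_interior_in_range) (auto simp: hull)
  moreover have "rat_vec (w j)" for j
  proof -
    obtain k where "w j = v k" using w by blast
    then show ?thesis using v_rat by simp
  qed
  then have "\<forall>i j. cols_matrix w $ i $ j \<in> \<rat>" by (simp add: cols_matrix_def rat_vec_def)
  ultimately show ?thesis using hull GLZ_equiv_refl by (auto simp: GLQ_def)
qed

theorem theorem1p3:
  fixes \<Delta> :: "(real^'n) set" and g :: nat
  assumes "CARD('n) \<ge> 2"
    and "IP_simplex \<Delta>"
    and "g = gorenstein_index \<Delta>"
  shows "Vol \<Delta> * Vol (polar_dual \<Delta>)
           \<le> real (sylv_t g (CARD('n) + 1)) ^ 2 / real g ^ (CARD('n) + 2)
       \<and> (Vol \<Delta> * Vol (polar_dual \<Delta>)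
           = real (sylv_t g (CARD('n) + 1)) ^ 2 / real g ^ (CARD('n) + 2)
         \<longleftrightarrow> (\<exists>H::real^'n^'n. GLQ H \<and>
                GLZ_equiv \<Delta> ((\<lambda>x. H *v x) ` extremal_simplex g)))"
proof -
  have g: "g \<ge> 1" using IP_simplex_weights[OF assms(2)] assms(3) by metis
  have "Vol \<Delta> * Vol (polar_dual \<Delta>) = real (sylv_t g (CARD('n) + 1)) ^ 2 / real g ^ (CARD('n) + 2)"
    if "GLQ H" "GLZ_equiv \<Delta> ((\<lambda>x. H *v x) ` extremal_simplex g)" for H :: "real^'n^'n"
    using that vol_product_image_extremal_simplex[OF g] unfolding GLQ_def GLZ_equiv_def by auto
  then show ?thesis
    using vol_product_IP_simplex_le[OF assms(2,3)] IP_simplex_extremal_if_vol_product_eq[OF assms] by blast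
qed

end
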